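(* Let $\Gamma$ be a countable sofic group and $s_1,s_2,\dots$ a generating sequence of $\Gamma$. Consider the Bernoulli shift $\theta$ of $\Gamma$ on $\{0,1\}^\Gamma$ with the product of uniform measures, $\theta(f,\gamma)(\delta)=f(\gamma\delta)$, identified with $(X,\mu)$ via a fixed enumeration of $\Gamma$, and regarded as an action of $\mathbb F_\infty$ via $\gamma_i\mapsto s_i$. Then this action is sofic; in particular the orbit equivalence relation of the Bernoulli shift of a sofic group is a sofic equivalence relation.
   Context: A countable group $\Gamma$ is sofic if for every $0<\varepsilon<1$ and every finite $F\subseteq\Gamma$ there are $n$ and a map $\phi:\Gamma\to S_n$ with: $\phi(e)\phi(f)\phi(ef)^{-1}$ has at least $(1-\varepsilon)n$ fixed points for all $e,f\in F$; $\phi(1)=1$; and $\phi(e)$ has at most $\varepsilon n$ fixed points for every $1\ne e\in F$. $X=\{0,1\}^{\mathbb N}$ with product uniform measure $\mu$; $\mathbb F_\infty$ free on $\gamma_1,\gamma_2,\dots$; $W_r$ the reduced words of length $\le r$ in $\gamma_1^{\pm1},\dots,\gamma_r^{\pm1}$. For an action $\theta$ of $\mathbb F_\infty$ on $X$ or on a finite set $Y$ whose points carry labels in $\{0,1\}^{\mathbb N}$ (points of $X$ labelled by themselves), $B^r_r(x)$ is the rooted directed multigraph on vertex set $\theta(W_r,x)$, root $x$, with an edge $y\to\theta(\gamma_i^\epsilon,y)$ coloured $\gamma_i^\epsilon$ for each vertex $y$, $i\le r$, $\epsilon=\pm1$ with $\theta(\gamma_i^\epsilon,y)$ a vertex, vertices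 labelled by the first $r$ digits of their labels; $U^{r,r}$ is the finite set of isomorphism types; $p_\alpha(\theta)$ is the measure (on $X$) resp. proportion (on $Y$) of $x$ with $B^r_r(x)\cong\alpha$. A $\mu$-preserving Borel action $\theta$ on $X$ is sofic if there are actions $\theta_n$ on labelled finite sets with $p_\alpha(\theta_n)\to p_\alpha(\theta)$ for all $r\ge1$, $\alpha\in U^{r,r}$. A $\mu$-preserving countable Borel equivalence relation on $X$ is sofic if it is the orbit relation of a sofic action. *)

theory Defs
  imports "HOL-Probability.Probability" "HOL-Algebra.Generated_Groups"
          "HOL-Combinatorics.Permutations"
begin

text \<open>Maps into S_n are modelled as maps into permutations of the set {0..<n}.
  The permutation phi(a) phi(b) phi(ab)^{-1} is the composition of functions.
  We require n > 0 (S_0 is not meant).\<close>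

definition sofic_group :: "('a, 'b) monoid_scheme \<Rightarrow> bool" where
  "sofic_group G \<longleftrightarrow>
     (\<forall>\<epsilon>::real. 0 < \<epsilon> \<and> \<epsilon> < 1 \<longrightarrow>
       (\<forall>F. finite F \<and> F \<subseteq> carrier G \<longrightarrow>
         (\<exists>n::nat. n > 0 \<and> (\<exists>\<phi> :: 'a \<Rightarrow> nat \<Rightarrow> nat.
            (\<forall>g\<in>carrier G. \<phi> g permutes {..<n}) \<and>
            \<phi> \<one>\<^bsub>G\<^esub> = id \<and>
            (\<forall>a\<in>F. \<forall>b\<in>F.
               real (card {k\<in>{..<n}. (\<phi> a \<circ> \<phi> b \<circ> inv_into UNIV (\<phi> (a \<otimes>\<^bsub>G\<^esub> b))) k = k})
                 \<ge> (1 - \<epsilon>) * real n) \<and>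
            (\<forall>a\<in>F. a \<noteq> \<one>\<^bsub>G\<^esub> \<longrightarrow>
               real (card {k\<in>{..<n}. \<phi> a k = k}) \<le> \<epsilon> * real n)))))"

text \<open>An action of F_infinity on a set S is given by the actions T i of the free
  generators gamma_i (i >= 1), which are bijections of S.  A letter (i, True) stands
  for gamma_i, (i, False) for gamma_i^{-1}.\<close>

type_synonym letter = "nat \<times> bool"

definition reduced_words :: "nat \<Rightarrow> letter list set" where
  "reduced_words r = {w. length w \<le> r \<and> (\<forall>a\<in>set w. fst a \<in> {1..r}) \<and>
     (\<forall>j. Suc j < length w \<longrightarrow>
        \<not> (fst (w ! j) = fst (w ! Suc j) \<and> snd (w ! j) \<noteq> snd (w ! Suc j)))}"

definition act_letter :: "'s set \<Rightarrow> (nat \<Rightarrow> 's \<Rightarrow> 's) \<Rightarrow> letter \<Rightarrow> 's \<Rightarrow> 's" where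
  "act_letter S T a y = (if snd a then T (fst a) y else inv_into S (T (fst a)) y)"

definition act_word :: "'s set \<Rightarrow> (nat \<Rightarrow> 's \<Rightarrow> 's) \<Rightarrow> letter list \<Rightarrow> 's \<Rightarrow> 's" where
  "act_word S T w y = foldr (act_letter S T) w y"

text \<open>Rooted, vertex-labelled, edge-coloured directed multigraphs:
  (vertex set, root, coloured edges (E y a = Some z: edge y -> z of colour a), labels).\<close>

type_synonym 'v rgraph = "'v set \<times> 'v \<times> ('v \<Rightarrow> letter \<Rightarrow> 'v option) \<times> ('v \<Rightarrow> bool list)"

definition rgraph_iso :: "'v rgraph \<Rightarrow> 'w rgraph \<Rightarrow> bool" where
  "rgraph_iso A B = (case A of (V, x, E, lab) \<Rightarrow> case B of (V', x', E', lab') \<Rightarrow>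
     (\<exists>\<phi>. bij_betw \<phi> V V' \<and> \<phi> x = x' \<and>
        (\<forall>y\<in>V. lab' (\<phi> y) = lab y \<and> (\<forall>a. E' (\<phi> y) a = map_option \<phi> (E y a)))))"

definition ball_graph ::
  "nat \<Rightarrow> 's set \<Rightarrow> (nat \<Rightarrow> 's \<Rightarrow> 's) \<Rightarrow> ('s \<Rightarrow> nat \<Rightarrow> bool) \<Rightarrow> 's \<Rightarrow> 's rgraph" where
  "ball_graph r S T L x =
     (let V = (\<lambda>w. act_word S T w x) ` reduced_words r in
      (V, x,
       (\<lambda>y a. if y \<in> V \<and> fst a \<in> {1..r} \<and> act_letter S T a y \<in> V
              then Some (act_letter S T a y) else None),
       (\<lambda>y. map (L y) [0..<r])))"

definition cantor_measure :: "(nat \<Rightarrow> bool) measure" where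
  "cantor_measure = PiM UNIV (\<lambda>_::nat. measure_pmf (pmf_of_set (UNIV :: bool set)))"

definition p_meas :: "nat \<Rightarrow> (nat \<Rightarrow> (nat \<Rightarrow> bool) \<Rightarrow> (nat \<Rightarrow> bool)) \<Rightarrow> 'v rgraph \<Rightarrow> real" where
  "p_meas r T \<alpha> = measure cantor_measure
     {x \<in> space cantor_measure. rgraph_iso (ball_graph r UNIV T (\<lambda>x. x) x) \<alpha>}"

definition p_fin ::
  "nat \<Rightarrow> 's set \<Rightarrow> (nat \<Rightarrow> 's \<Rightarrow> 's) \<Rightarrow> ('s \<Rightarrow> nat \<Rightarrow> bool) \<Rightarrow> 'v rgraph \<Rightarrow> real" where
  "p_fin r Y T L \<alpha> = real (card {y \<in> Y. rgraph_iso (ball_graph r Y T L y) \<alpha>}) / real (card Y)"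

definition mpres :: "((nat \<Rightarrow> bool) \<Rightarrow> (nat \<Rightarrow> bool)) \<Rightarrow> bool" where
  "mpres f \<longleftrightarrow> f \<in> cantor_measure \<rightarrow>\<^sub>M cantor_measure \<and>
     distr cantor_measure cantor_measure f = cantor_measure"

definition mp_borel_action :: "(nat \<Rightarrow> (nat \<Rightarrow> bool) \<Rightarrow> (nat \<Rightarrow> bool)) \<Rightarrow> bool" where
  "mp_borel_action T \<longleftrightarrow> (\<forall>i\<ge>1. bij (T i) \<and>
      mpres (T i) \<and> mpres (inv_into UNIV (T i)))"

text \<open>Isomorphism types alpha in U^{r,r} are represented by rooted graphs on vertices in nat
  (every finite type has such a representative); graphs which are not of the form B^r_r
  have p = 0 on both sides, so quantifying over all of them is harmless.\<close>

definition sofic_action :: "(nat \<Rightarrow> (nat \<Rightarrow> bool) \<Rightarrow> (nat \<Rightarrow> bool)) \<Rightarrow> bool" where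
  "sofic_action T \<longleftrightarrow> mp_borel_action T \<and>
     (\<exists>(Y :: nat \<Rightarrow> nat set) (TT :: nat \<Rightarrow> nat \<Rightarrow> nat \<Rightarrow> nat) (L :: nat \<Rightarrow> nat \<Rightarrow> nat \<Rightarrow> bool).
        (\<forall>n. finite (Y n) \<and> Y n \<noteq> {} \<and> (\<forall>i\<ge>1. bij_betw (TT n i) (Y n) (Y n))) \<and>
        (\<forall>r\<ge>1. \<forall>\<alpha> :: nat rgraph.
           (\<lambda>n. p_fin r (Y n) (TT n) (L n) \<alpha>) \<longlonglongrightarrow> p_meas r T \<alpha>))"

definition orbit_rel :: "(nat \<Rightarrow> (nat \<Rightarrow> bool) \<Rightarrow> (nat \<Rightarrow> bool)) \<Rightarrow> ((nat \<Rightarrow> bool) \<times> (nat \<Rightarrow> bool)) set" where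
  "orbit_rel T = {(x, y). \<exists>w. (\<forall>a\<in>set w. fst a \<ge> 1) \<and> y = act_word UNIV T w x}"

definition sofic_eqrel :: "((nat \<Rightarrow> bool) \<times> (nat \<Rightarrow> bool)) set \<Rightarrow> bool" where
  "sofic_eqrel R \<longleftrightarrow> (\<exists>T. sofic_action T \<and> R = orbit_rel T)"

text \<open>theta(f, g)(delta) = f(g delta) on {0,1}^Gamma, transported to X = {0,1}^nat via the
  enumeration e : nat -> Gamma (x corresponds to f = x o e^{-1}).\<close>

definition bshift :: "('a, 'b) monoid_scheme \<Rightarrow> (nat \<Rightarrow> 'a) \<Rightarrow> 'a \<Rightarrow> (nat \<Rightarrow> bool) \<Rightarrow> (nat \<Rightarrow> bool)" where
  "bshift G e g x = (\<lambda>k. x (inv_into UNIV e (g \<otimes>\<^bsub>G\<^esub> e k)))"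

end

theory Submission
  imports Defs
begin

(* Regarded as an F_infinity action via gamma_i -> s_i, a word w acts on
   X = {0,1}^Gamma as the shift by the group element g(w).  Almost every point x is "free":
   distinct group elements move x to distinct points.  For a free x the ball B^r_r(x) is
   determined by which short words represent the same group element and by the colours of x at
   a finite set J_r of coordinates; hence p_alpha(theta) is the proportion of colourings of J_r
   that produce the type alpha.
   The finite models come from sofic approximations phi : Gamma -> Sym(n): the set is
   {0,1}^n x {0..<n}, gamma_i acts on the second coordinate by phi(s_i^-1), and the point (w, v)
   is labelled by reading w along phi.  If phi is multiplicative and free at v on a suitable
   finite control set ("v is good"), the ball at (w, v) reproduces a ball of the shift, and w
   ranges uniformly over the colourings of J_r; bad points have density O(epsilon). *)

section \<open>Words and balls of actions\<close>

text \<open>Words of length at most r+1 in the letters gamma_1, ..., gamma_r: the reduced words of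
  length at most r together with their one-letter extensions.  Coincidences among the endpoints
  of these words determine the ball B^r_r.\<close>

definition short_words :: "nat \<Rightarrow> letter list set" where
  "short_words r = {u. length u \<le> Suc r \<and> (\<forall>a\<in>set u. fst a \<in> {1..r})}"

lemma act_word_Nil [simp]: "act_word S T [] y = y"
  by (simp add: act_word_def)

lemma act_word_Cons [simp]: "act_word S T (a # w) y = act_letter S T a (act_word S T w y)"
  by (simp add: act_word_def)

lemma reduced_words_subset_short_words: "reduced_words r \<subseteq> short_words r"
  by (auto simp: reduced_words_def short_words_def)

lemma Nil_in_reduced_words [simp]: "[] \<in> reduced_words r"
  by (simp add: reduced_words_def)

lemma Cons_in_short_words: "w \<in> reduced_words r \<Longrightarrow> fst a \<in> {1..r} \<Longrightarrow> a # w \<in> short_words r"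
  by (auto simp: reduced_words_def short_words_def)

lemma short_words_letters: "u \<in> short_words r \<Longrightarrow> \<forall>a\<in>set u. fst a \<ge> 1"
  by (auto simp: short_words_def)

lemma reduced_words_letters: "u \<in> reduced_words r \<Longrightarrow> \<forall>a\<in>set u. fst a \<ge> 1"
  using reduced_words_subset_short_words short_words_letters by blast

lemma finite_short_words: "finite (short_words r)"
proof (rule finite_subset)
  show "short_words r \<subseteq> {u. set u \<subseteq> {1..r} \<times> UNIV \<and> length u \<le> Suc r}"
    by (auto simp: short_words_def)
  show "finite {u. set u \<subseteq> {1..r} \<times> (UNIV :: bool set) \<and> length u \<le> Suc r}"
    by (rule finite_lists_length_le) auto
qed

lemma finite_reduced_words: "finite (reduced_words r)"
  using finite_subset[OF reduced_words_subset_short_words finite_short_words] .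

lemma coincidence_map:
  assumes same: "\<And>u u'. u \<in> short_words r \<Longrightarrow> u' \<in> short_words r \<Longrightarrow>
      act_word S T u x = act_word S T u' x \<longleftrightarrow> act_word S' T' u x' = act_word S' T' u' x'"
  obtains \<psi> where "bij_betw \<psi> ((\<lambda>w. act_word S T w x) ` reduced_words r)
                                ((\<lambda>w. act_word S' T' w x') ` reduced_words r)"
    and "\<And>w. w \<in> reduced_words r \<Longrightarrow> \<psi> (act_word S T w x) = act_word S' T' w x'"
proof -
  let ?A = "\<lambda>w. act_word S T w x" and ?B = "\<lambda>w. act_word S' T' w x'" and ?R = "reduced_words r"
  define \<psi> where "\<psi> y = ?B (SOME w. w \<in> ?R \<and> ?A w = y)" for y
  have same_R: "?A u = ?A u' \<longleftrightarrow> ?B u = ?B u'" if "u \<in> ?R" "u' \<in> ?R" for u u'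
    using same that reduced_words_subset_short_words by blast
  have \<psi>: "\<psi> (?A w) = ?B w" if "w \<in> ?R" for w
  proof -
    have "\<exists>w'. w' \<in> ?R \<and> ?A w' = ?A w" using that by blast
    then have "(SOME w'. w' \<in> ?R \<and> ?A w' = ?A w) \<in> ?R \<and> ?A (SOME w'. w' \<in> ?R \<and> ?A w' = ?A w) = ?A w"
      by (rule someI_ex)
    then show ?thesis unfolding \<psi>_def using same_R that by blast
  qed
  have "bij_betw \<psi> (?A ` ?R) (?B ` ?R)"
  proof (rule bij_betw_imageI)
    show "inj_on \<psi> (?A ` ?R)" by (auto simp: inj_on_def \<psi> same_R)
    show "\<psi> ` ?A ` ?R = ?B ` ?R" by (auto simp: image_image \<psi>)
  qed
  from this \<psi> show thesis by (rule that)
qed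

lemma ball_iso_of_coincidences:
  assumes same: "\<And>u u'. u \<in> short_words r \<Longrightarrow> u' \<in> short_words r \<Longrightarrow>
      act_word S T u x = act_word S T u' x \<longleftrightarrow> act_word S' T' u x' = act_word S' T' u' x'"
    and labels: "\<And>w k. w \<in> reduced_words r \<Longrightarrow> k < r \<Longrightarrow>
      L' (act_word S' T' w x') k = L (act_word S T w x) k"
  shows "rgraph_iso (ball_graph r S T L x) (ball_graph r S' T' L' x')"
proof -
  let ?A = "\<lambda>w. act_word S T w x" and ?B = "\<lambda>w. act_word S' T' w x'" and ?R = "reduced_words r"
  obtain \<psi> where bij: "bij_betw \<psi> (?A ` ?R) (?B ` ?R)" and \<psi>: "\<And>w. w \<in> ?R \<Longrightarrow> \<psi> (?A w) = ?B w"
    using coincidence_map[OF same] by blast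
  have in_ball_iff: "?B u \<in> ?B ` ?R \<longleftrightarrow> ?A u \<in> ?A ` ?R" if "u \<in> short_words r" for u
    using same[OF that] reduced_words_subset_short_words by blast
  have \<psi>_ext: "\<psi> (?A u) = ?B u" if "u \<in> short_words r" "?A u \<in> ?A ` ?R" for u
  proof -
    from that(2) obtain w' where w': "w' \<in> ?R" "?A u = ?A w'" by blast
    then have "?B u = ?B w'" using same[OF that(1)] reduced_words_subset_short_words by blast
    then show ?thesis using w' \<psi> by simp
  qed
  have edge: "(if \<psi> (?A w) \<in> ?B ` ?R \<and> fst a \<in> {1..r} \<and> act_letter S' T' a (\<psi> (?A w)) \<in> ?B ` ?R
          then Some (act_letter S' T' a (\<psi> (?A w))) else None)
      = map_option \<psi> (if ?A w \<in> ?A ` ?R \<and> fst a \<in> {1..r} \<and> act_letter S T a (?A w) \<in> ?A ` ?R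
          then Some (act_letter S T a (?A w)) else None)" if w: "w \<in> ?R" for w a
  proof (cases "fst a \<in> {1..r}")
    case True
    have aw: "a # w \<in> short_words r" using Cons_in_short_words[OF w True] .
    have step: "act_letter S T a (?A w) = ?A (a # w)" "act_letter S' T' a (\<psi> (?A w)) = ?B (a # w)"
      using \<psi>[OF w] by simp_all
    have centre: "\<psi> (?A w) \<in> ?B ` ?R" "?A w \<in> ?A ` ?R" using \<psi>[OF w] w by auto
    show ?thesis
      unfolding step using True centre in_ball_iff[OF aw] \<psi>_ext[OF aw]
      by (cases "?A (a # w) \<in> ?A ` ?R") (simp_all del: act_word_Cons)
  qed auto
  show ?thesis
    unfolding rgraph_iso_def ball_graph_def Let_def prod.case
  proof (rule exI[of _ \<psi>], intro conjI ballI allI)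
    show "bij_betw \<psi> (?A ` ?R) (?B ` ?R)" by (rule bij)
    show "\<psi> x = x'" using \<psi>[of "[]"] by simp
  next
    fix y assume "y \<in> ?A ` ?R"
    then obtain w where w: "w \<in> ?R" "y = ?A w" by blast
    show "map (L' (\<psi> y)) [0..<r] = map (L y) [0..<r]"
      using w \<psi> labels by simp
    fix a
    show "(if \<psi> y \<in> ?B ` ?R \<and> fst a \<in> {1..r} \<and> act_letter S' T' a (\<psi> y) \<in> ?B ` ?R
          then Some (act_letter S' T' a (\<psi> y)) else None)
      = map_option \<psi> (if y \<in> ?A ` ?R \<and> fst a \<in> {1..r} \<and> act_letter S T a y \<in> ?A ` ?R
          then Some (act_letter S T a y) else None)"
      unfolding w(2) by (rule edge[OF w(1)])
  qed
qed

lemma rgraph_iso_trans: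
  assumes "rgraph_iso A B" "rgraph_iso B C" shows "rgraph_iso A C"
proof -
  obtain V x E lab where A: "A = (V, x, E, lab)" by (cases A) auto
  obtain V' x' E' lab' where B: "B = (V', x', E', lab')" by (cases B) auto
  obtain V'' x'' E'' lab'' where C: "C = (V'', x'', E'', lab'')" by (cases C) auto
  from assms(1) obtain \<phi> where \<phi>: "bij_betw \<phi> V V'" "\<phi> x = x'"
    "\<forall>y\<in>V. lab' (\<phi> y) = lab y \<and> (\<forall>a. E' (\<phi> y) a = map_option \<phi> (E y a))"
    by (auto simp: rgraph_iso_def A B)
  from assms(2) obtain \<theta> where \<theta>: "bij_betw \<theta> V' V''" "\<theta> x' = x''"
    "\<forall>y\<in>V'. lab'' (\<theta> y) = lab' y \<and> (\<forall>a. E'' (\<theta> y) a = map_option \<theta> (E' y a))"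
    by (auto simp: rgraph_iso_def B C)
  have "\<phi> y \<in> V'" if "y \<in> V" for y using \<phi>(1) that by (meson bij_betwE)
  then show ?thesis
    unfolding rgraph_iso_def A C prod.case
    using \<phi> \<theta> bij_betw_trans[OF \<phi>(1) \<theta>(1)] by (intro exI[of _ "\<theta> \<circ> \<phi>"]) (auto simp: option.map_comp)
qed

lemma act_word_closed:
  assumes "\<And>i. i \<in> {1..r} \<Longrightarrow> bij_betw (T i) Z Z" "z \<in> Z" "\<forall>a\<in>set u. fst a \<in> {1..r}"
  shows "act_word Z T u z \<in> Z"
  using assms(3)
proof (induction u)
  case (Cons a u)
  then have "act_word Z T u z \<in> Z" and "bij_betw (T (fst a)) Z Z" using assms(1) by auto
  then show ?case by (auto simp: act_letter_def bij_betwE bij_betw_def inv_into_into)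
qed (use assms(2) in simp)

lemma act_word_conj:
  assumes f: "bij_betw f Z Y" and T: "\<And>i. i \<in> {1..r} \<Longrightarrow> bij_betw (T i) Z Z"
    and T': "\<And>i y. y \<in> Y \<Longrightarrow> T' i y = f (T i (inv_into Z f y))"
    and z: "z \<in> Z" and u: "\<forall>a\<in>set u. fst a \<in> {1..r}"
  shows "act_word Y T' u (f z) = f (act_word Z T u z)"
  using u
proof (induction u)
  case (Cons a u)
  then have a: "fst a \<in> {1..r}" and IH: "act_word Y T' u (f z) = f (act_word Z T u z)" by auto
  define w where "w = act_word Z T u z"
  have w: "w \<in> Z" unfolding w_def using Cons.prems by (intro act_word_closed[OF T z]) auto
  have Ta: "bij_betw (T (fst a)) Z Z" using T a .
  have f_inv: "inv_into Z f (f v) = v" if "v \<in> Z" for v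
    using f that by (simp add: bij_betw_def inv_into_f_f)
  have "bij_betw (f \<circ> T (fst a) \<circ> inv_into Z f) Y Y"
    using bij_betw_trans[OF bij_betw_trans[OF bij_betw_inv_into[OF f] Ta] f] by (simp add: comp_assoc)
  then have T'_bij: "bij_betw (T' (fst a)) Y Y"
    using T' by (subst bij_betw_cong[where g = "f \<circ> T (fst a) \<circ> inv_into Z f"]) auto
  show ?case
  proof (cases "snd a")
    case True
    then show ?thesis using IH T' f w f_inv by (simp add: act_letter_def w_def bij_betwE)
  next
    case False
    define v where "v = inv_into Z (T (fst a)) w"
    have v: "v \<in> Z" "T (fst a) v = w" using Ta w unfolding v_def
      by (metis bij_betw_def inv_into_into, metis bij_betw_def f_inv_into_f)
    have "T' (fst a) (f v) = f w" using T' f v f_inv by (simp add: bij_betwE)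
    then have "inv_into Y (T' (fst a)) (f w) = f v"
      using T'_bij f v(1) by (metis bij_betw_def bij_betwE inv_into_f_f)
    then show ?thesis using IH False by (simp add: act_letter_def w_def v_def)
  qed
qed simp

lemma ball_iso_conj:
  assumes f: "bij_betw f Z Y" and T: "\<And>i. i \<in> {1..r} \<Longrightarrow> bij_betw (T i) Z Z"
    and T': "\<And>i y. y \<in> Y \<Longrightarrow> T' i y = f (T i (inv_into Z f y))"
    and L': "\<And>y. y \<in> Y \<Longrightarrow> L' y = L (inv_into Z f y)"
    and z: "z \<in> Z"
  shows "rgraph_iso (ball_graph r Y T' L' (f z)) (ball_graph r Z T L z)"
    and "rgraph_iso (ball_graph r Z T L z) (ball_graph r Y T' L' (f z))"
proof -
  have conj: "act_word Y T' u (f z) = f (act_word Z T u z)" if "u \<in> short_words r" for u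
    using act_word_conj[OF f T T' z] that by (auto simp: short_words_def)
  have closed: "act_word Z T u z \<in> Z" if "u \<in> short_words r" for u
    using act_word_closed[OF T z] that by (auto simp: short_words_def)
  have inj: "inj_on f Z" using f by (simp add: bij_betw_def)
  have same: "act_word Y T' u (f z) = act_word Y T' u' (f z) \<longleftrightarrow> act_word Z T u z = act_word Z T u' z"
    if "u \<in> short_words r" "u' \<in> short_words r" for u u'
    using conj[OF that(1)] conj[OF that(2)] closed[OF that(1)] closed[OF that(2)] inj
    by (metis inj_on_def)
  have labels: "L' (act_word Y T' w (f z)) k = L (act_word Z T w z) k"
    if "w \<in> reduced_words r" for w k
  proof -
    have w: "w \<in> short_words r" using that reduced_words_subset_short_words by blast
    have "f (act_word Z T w z) \<in> Y" using closed[OF w] f by (meson bij_betwE)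
    then show ?thesis using conj[OF w] L' closed[OF w] inj by (simp add: inv_into_f_f)
  qed
  show "rgraph_iso (ball_graph r Y T' L' (f z)) (ball_graph r Z T L z)"
    and "rgraph_iso (ball_graph r Z T L z) (ball_graph r Y T' L' (f z))"
    by (rule ball_iso_of_coincidences; use same labels in auto)+
qed

lemma p_fin_conj:
  assumes f: "bij_betw f Z Y" and T: "\<And>i. i \<in> {1..r} \<Longrightarrow> bij_betw (T i) Z Z"
    and T': "\<And>i y. y \<in> Y \<Longrightarrow> T' i y = f (T i (inv_into Z f y))"
    and L': "\<And>y. y \<in> Y \<Longrightarrow> L' y = L (inv_into Z f y)"
  shows "p_fin r Y T' L' \<alpha> = p_fin r Z T L \<alpha>"
proof -
  have "{y \<in> Y. rgraph_iso (ball_graph r Y T' L' y) \<alpha>} = f ` {z \<in> Z. rgraph_iso (ball_graph r Z T L z) \<alpha>}"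
  proof safe
    fix y assume y: "y \<in> Y" "rgraph_iso (ball_graph r Y T' L' y) \<alpha>"
    obtain z where z: "z \<in> Z" "y = f z" using f y(1) by (metis bij_betw_def imageE)
    have "rgraph_iso (ball_graph r Z T L z) \<alpha>"
      using rgraph_iso_trans[OF ball_iso_conj(2)[where r = r and T = T and T' = T' and L = L and L' = L', OF f T T' L' z(1)]] y(2) z(2) by simp
    then show "y \<in> f ` {z \<in> Z. rgraph_iso (ball_graph r Z T L z) \<alpha>}" using z by blast
  next
    fix z assume z: "z \<in> Z" "rgraph_iso (ball_graph r Z T L z) \<alpha>"
    show "f z \<in> Y" using f z(1) by (meson bij_betwE)
    show "rgraph_iso (ball_graph r Y T' L' (f z)) \<alpha>"
      using rgraph_iso_trans[OF ball_iso_conj(1)[where r = r and T = T and T' = T' and L = L and L' = L', OF f T T' L' z(1)] z(2)] .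
  qed
  moreover have "inj_on f {z \<in> Z. rgraph_iso (ball_graph r Z T L z) \<alpha>}"
    using f by (auto simp: bij_betw_def inj_on_def)
  moreover have "card Y = card Z" using f by (simp add: bij_betw_same_card)
  ultimately show ?thesis by (simp add: p_fin_def card_image)
qed

text \<open>Any finite model can be copied onto an initial segment of nat, through a fixed
  enumeration, without changing its statistics; this is the form of finite models required by
  the definition of sofic actions.\<close>

definition nat_enum :: "'s set \<Rightarrow> 's \<Rightarrow> nat" where
  "nat_enum Z = (SOME f. bij_betw f Z {0..<card Z})"

definition nat_copy_act :: "'s set \<Rightarrow> (nat \<Rightarrow> 's \<Rightarrow> 's) \<Rightarrow> nat \<Rightarrow> nat \<Rightarrow> nat" where
  "nat_copy_act Z T i y = nat_enum Z (T i (inv_into Z (nat_enum Z) y))"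

definition nat_copy_label :: "'s set \<Rightarrow> ('s \<Rightarrow> nat \<Rightarrow> bool) \<Rightarrow> nat \<Rightarrow> nat \<Rightarrow> bool" where
  "nat_copy_label Z L y = L (inv_into Z (nat_enum Z) y)"

lemma nat_enum_bij: "finite Z \<Longrightarrow> bij_betw (nat_enum Z) Z {0..<card Z}"
  unfolding nat_enum_def using ex_bij_betw_finite_nat by (rule someI_ex)

lemma nat_copy_act_bij:
  assumes Z: "finite Z" and T: "bij_betw (T i) Z Z"
  shows "bij_betw (nat_copy_act Z T i) {0..<card Z} {0..<card Z}"
proof -
  note f = nat_enum_bij[OF Z]
  have "bij_betw (nat_enum Z \<circ> T i \<circ> inv_into Z (nat_enum Z)) {0..<card Z} {0..<card Z}"
    using bij_betw_trans[OF bij_betw_trans[OF bij_betw_inv_into[OF f] T] f] by (simp add: comp_assoc)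
  moreover have "nat_copy_act Z T i = nat_enum Z \<circ> T i \<circ> inv_into Z (nat_enum Z)"
    by (auto simp: nat_copy_act_def)
  ultimately show ?thesis by simp
qed

lemma p_fin_nat_copy:
  assumes Z: "finite Z" and T: "\<And>i. i \<in> {1..r} \<Longrightarrow> bij_betw (T i) Z Z"
  shows "p_fin r {0..<card Z} (nat_copy_act Z T) (nat_copy_label Z L) \<alpha> = p_fin r Z T L \<alpha>"
  by (rule p_fin_conj[OF nat_enum_bij[OF Z] T]) (auto simp: nat_copy_act_def nat_copy_label_def)

section \<open>The Cantor space\<close>

abbreviation coin :: "nat \<Rightarrow> bool measure" where
  "coin \<equiv> (\<lambda>_. measure_pmf (pmf_of_set (UNIV :: bool set)))"

interpretation coins: product_prob_space coin "UNIV :: nat set"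
  by unfold_locales (simp add: prob_space_measure_pmf)

lemma cantor_measure_eq: "cantor_measure = PiM UNIV coin"
  by (simp add: cantor_measure_def)

lemma space_cantor_measure [simp]: "space cantor_measure = UNIV"
  by (simp add: cantor_measure_def space_PiM)

lemma prob_space_cantor_measure: "prob_space cantor_measure"
  unfolding cantor_measure_eq by (rule coins.P.prob_space_axioms)

lemma finite_product_colourings:
  assumes J: "finite J"
  shows "{f \<in> PiE J (\<lambda>_. UNIV). P f} \<in> sets (PiM J coin)"
    and "emeasure (PiM J coin) {f \<in> PiE J (\<lambda>_. UNIV). P f}
           = card {f \<in> PiE J (\<lambda>_. UNIV). P f} * (1/2) ^ card J"
proof -
  let ?X = "{f \<in> PiE J (\<lambda>_. UNIV::bool set). P f}"
  have fin: "finite ?X"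
    by (rule finite_subset[of _ "PiE J (\<lambda>_. UNIV)"]) (auto intro: finite_PiE simp: J)
  have single: "{f} = PiE J (\<lambda>j. {f j})" if "f \<in> PiE J (\<lambda>_. UNIV)" for f
    using that by (auto simp: PiE_iff extensional_def) (metis ext)
  have single_sets: "{f} \<in> sets (PiM J coin)" if "f \<in> ?X" for f
    using that single[of f] J by (auto intro!: sets_PiM_I_finite)
  have "?X = (\<Union>f\<in>?X. {f})" by blast
  also have "\<dots> \<in> sets (PiM J coin)"
    using fin single_sets by (intro sets.finite_UN) auto
  finally show "?X \<in> sets (PiM J coin)" .
  have single_measure: "emeasure (PiM J coin) {f} = ennreal ((1/2) ^ card J)" if "f \<in> ?X" for f
  proof -
    have "emeasure (PiM J coin) {f} = (\<Prod>j\<in>J. emeasure (coin j) {f j})"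
      using single[of f] that J by (simp add: coins.emeasure_PiM)
    also have "\<dots> = (\<Prod>j\<in>J. ennreal (1/2))" by (simp add: emeasure_pmf_single)
    also have "\<dots> = ennreal ((1/2) ^ card J)" by (simp only: prod_constant) (rule ennreal_power, simp)
    finally show ?thesis .
  qed
  have "emeasure (PiM J coin) ?X = (\<Sum>f\<in>?X. emeasure (PiM J coin) {f})"
    using fin single_sets by (rule emeasure_eq_sum_singleton)
  also have "\<dots> = (\<Sum>f\<in>?X. ennreal ((1/2) ^ card J))" using single_measure by simp
  also have "\<dots> = card ?X * (1/2) ^ card J"
    by (simp add: ennreal_of_nat_eq_real_of_nat ennreal_mult')
  finally show "emeasure (PiM J coin) ?X = card ?X * (1/2) ^ card J" .
qed

lemma cylinder_eq_prod_emb: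
  "{x. P (restrict x J)} = prod_emb UNIV coin J {f \<in> PiE J (\<lambda>_. UNIV). P f}"
  by (auto simp: prod_emb_def space_PiM)

lemma cylinder_sets:
  assumes "finite J"
  shows "{x. P (restrict x J)} \<in> sets cantor_measure"
  unfolding cylinder_eq_prod_emb cantor_measure_eq
  by (rule measurable_prod_emb) (use finite_product_colourings(1)[OF assms] in auto)

lemma cylinder_measure:
  assumes J: "finite J"
  shows "measure cantor_measure {x. P (restrict x J)} = card {f \<in> PiE J (\<lambda>_. UNIV). P f} / 2 ^ card J"
proof -
  have "emeasure cantor_measure {x. P (restrict x J)} = card {f \<in> PiE J (\<lambda>_. UNIV). P f} * (1/2) ^ card J"
    unfolding cylinder_eq_prod_emb cantor_measure_eq
    using coins.emeasure_PiM_emb'[of J "{f \<in> PiE J (\<lambda>_. UNIV). P f}"] finite_product_colourings[OF J] J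
    by simp
  then show ?thesis by (simp add: measure_def power_divide)
qed

lemma p_meas_bounds: "0 \<le> p_meas r T \<alpha>" "p_meas r T \<alpha> \<le> 1"
  unfolding p_meas_def using prob_space.prob_le_1[OF prob_space_cantor_measure] by (auto simp: measure_nonneg)

lemma coincidence_set_sets:
  fixes p q :: "nat \<Rightarrow> nat"
  shows "{x::nat \<Rightarrow> bool. \<forall>k. x (p k) = x (q k)} \<in> sets cantor_measure"
proof -
  have pair: "{x::nat \<Rightarrow> bool. x (p k) = x (q k)} \<in> sets cantor_measure" for k
    using cylinder_sets[of "{p k, q k}" "\<lambda>f. f (p k) = f (q k)"] by simp
  have "{x::nat \<Rightarrow> bool. \<forall>k. x (p k) = x (q k)} = (\<Inter>k. {x. x (p k) = x (q k)})" by auto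
  also have "\<dots> \<in> sets cantor_measure"
    by (rule sets.countable_INT'') (use pair sets.top[of cantor_measure] in auto)
  finally show ?thesis .
qed

text \<open>A fixed-point-free injection tau of nat: since every coordinate is a fair coin
  independent of the others, x = x o tau happens with probability zero.  The proof picks m
  coordinates K disjoint from tau(K) and uses that x must agree on the m pairs (i, tau i).\<close>

lemma exists_set_disjoint_from_image:
  fixes \<tau> :: "nat \<Rightarrow> nat"
  assumes inj: "inj \<tau>" and no_fix: "\<And>i. \<tau> i \<noteq> i"
  shows "\<exists>K. finite K \<and> card K = m \<and> K \<inter> \<tau> ` K = {}"
proof (induction m)
  case (Suc m)
  then obtain K where K: "finite K" "card K = m" "K \<inter> \<tau> ` K = {}" by blast
  have fin: "finite (K \<union> \<tau> ` K \<union> \<tau> -` K)"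
    using K(1) inj by (simp add: finite_vimageI)
  obtain k where k: "k \<notin> K \<union> \<tau> ` K \<union> \<tau> -` K"
    using ex_new_if_finite[OF infinite_UNIV_nat fin] by blast
  then have k': "k \<notin> K" "k \<notin> \<tau> ` K" "\<tau> k \<notin> K" by auto
  have "insert k K \<inter> \<tau> ` insert k K = {}"
  proof (rule equals0I)
    fix y assume "y \<in> insert k K \<inter> \<tau> ` insert k K"
    then have "y = k \<or> y \<in> K" and "y = \<tau> k \<or> y \<in> \<tau> ` K" by auto
    then show False using k' no_fix[of k] K(3) by auto
  qed
  moreover have "finite (insert k K)" "card (insert k K) = Suc m" using K k'(1) by auto
  ultimately show ?case by blast
qed (rule exI[of _ "{}"], simp)

lemma card_colourings_constant_on_pairs:
  fixes \<tau> :: "nat \<Rightarrow> nat"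
  assumes K: "finite K"
  shows "card {f \<in> PiE (K \<union> \<tau> ` K) (\<lambda>_. UNIV::bool set). \<forall>i\<in>K. f i = f (\<tau> i)} \<le> 2 ^ card K"
proof -
  let ?C = "{f \<in> PiE (K \<union> \<tau> ` K) (\<lambda>_. UNIV::bool set). \<forall>i\<in>K. f i = f (\<tau> i)}"
  have "inj_on (\<lambda>f. restrict f K) ?C"
  proof (rule inj_onI)
    fix f g assume f: "f \<in> ?C" and g: "g \<in> ?C" and eq: "restrict f K = restrict g K"
    have agree: "f i = g i" if "i \<in> K" for i using eq that by (metis restrict_apply')
    show "f = g"
    proof
      fix y
      consider "y \<in> K" | i where "i \<in> K" "y = \<tau> i" | "y \<notin> K \<union> \<tau> ` K" by blast
      then show "f y = g y"
      proof cases
        case 2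
        then show ?thesis using f g agree[OF 2(1)] by auto
      next
        case 3
        then show ?thesis using f g by (simp add: PiE_def extensional_def)
      qed (rule agree)
    qed
  qed
  moreover have "(\<lambda>f. restrict f K) ` ?C \<subseteq> PiE K (\<lambda>_. UNIV)" by auto
  moreover have "finite (PiE K (\<lambda>_. UNIV::bool set))" using K by (simp add: finite_PiE)
  ultimately have "card ?C \<le> card (PiE K (\<lambda>_. UNIV::bool set))" by (rule card_inj_on_le)
  also have "\<dots> = 2 ^ card K" using K by (simp add: card_PiE)
  finally show ?thesis .
qed

lemma measure_tau_invariant_le:
  fixes \<tau> :: "nat \<Rightarrow> nat"
  assumes inj: "inj \<tau>" and no_fix: "\<And>i. \<tau> i \<noteq> i"
  shows "measure cantor_measure {x. \<forall>i. x i = x (\<tau> i)} \<le> 1 / 2 ^ m"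
proof -
  obtain K where K: "finite K" "card K = m" "K \<inter> \<tau> ` K = {}"
    using exists_set_disjoint_from_image[OF inj no_fix] by blast
  define J where "J = K \<union> \<tau> ` K"
  have J: "finite J" using K by (simp add: J_def)
  have "card J = card K + card (\<tau> ` K)" unfolding J_def using K by (intro card_Un_disjoint) auto
  then have card_J: "card J = 2 * m" using K(2) card_image[OF inj_on_subset[OF inj subset_UNIV]] by simp
  let ?P = "\<lambda>f. \<forall>i\<in>K. f i = f (\<tau> i)"
  have "{x. \<forall>i. x i = x (\<tau> i)} \<subseteq> {x. ?P (restrict x J)}" by (auto simp: J_def)
  then have "measure cantor_measure {x. \<forall>i. x i = x (\<tau> i)} \<le> measure cantor_measure {x. ?P (restrict x J)}"
    by (rule finite_measure.finite_measure_mono[OF prob_space.finite_measure[OF prob_space_cantor_measure]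
          _ cylinder_sets[OF J]])
  also have "\<dots> = card {f \<in> PiE J (\<lambda>_. UNIV::bool set). ?P f} / 2 ^ card J"
    by (rule cylinder_measure[OF J])
  also have "\<dots> \<le> 2 ^ m / 2 ^ (2 * m)"
  proof -
    have "card {f \<in> PiE J (\<lambda>_. UNIV::bool set). ?P f} \<le> 2 ^ m"
      using card_colourings_constant_on_pairs[OF K(1), of \<tau>] K(2) by (simp add: J_def)
    then have "real (card {f \<in> PiE J (\<lambda>_. UNIV::bool set). ?P f}) \<le> real (2 ^ m)"
      by (simp only: of_nat_le_iff)
    then show ?thesis unfolding card_J by (intro divide_right_mono) auto
  qed
  also have "\<dots> = 1 / 2 ^ m" by (simp add: mult_2 power_add)
  finally show ?thesis .
qed

lemma measure_tau_invariant_zero: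
  fixes \<tau> :: "nat \<Rightarrow> nat"
  assumes inj: "inj \<tau>" and no_fix: "\<And>i. \<tau> i \<noteq> i"
  shows "measure cantor_measure {x. \<forall>i. x i = x (\<tau> i)} = 0"
proof (rule antisym[OF _ measure_nonneg], rule ccontr)
  let ?D = "{x::nat \<Rightarrow> bool. \<forall>i. x i = x (\<tau> i)}"
  assume "\<not> measure cantor_measure ?D \<le> 0"
  then obtain m where "1 / 2 ^ m < measure cantor_measure ?D"
    using real_arch_pow_inv[of "measure cantor_measure ?D" "1/2"] by (auto simp: power_one_over)
  then show False using measure_tau_invariant_le[OF inj no_fix, of m] by simp
qed

lemma card_colouring_extensions:
  assumes N: "finite N" and p: "inj_on p J" "p ` J \<subseteq> N" and f: "f \<in> PiE J (\<lambda>_. UNIV)"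
  shows "card {\<omega> \<in> PiE N (\<lambda>_. UNIV::bool set). restrict (\<lambda>j. \<omega> (p j)) J = f} = 2 ^ (card N - card J)"
proof -
  have J: "finite J" using N p finite_image_iff finite_subset by metis
  let ?fix = "\<lambda>i. if i \<in> p ` J then {f (the_inv_into J p i)} else (UNIV :: bool set)"
  have "{\<omega> \<in> PiE N (\<lambda>_. UNIV::bool set). restrict (\<lambda>j. \<omega> (p j)) J = f} = PiE N ?fix"
  proof (intro equalityI subsetI)
    fix \<omega> assume "\<omega> \<in> {\<omega> \<in> PiE N (\<lambda>_. UNIV::bool set). restrict (\<lambda>j. \<omega> (p j)) J = f}"
    then have \<omega>: "\<omega> \<in> PiE N (\<lambda>_. UNIV)" and eq: "restrict (\<lambda>j. \<omega> (p j)) J = f" by auto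
    have "\<omega> (p j) = f j" if "j \<in> J" for j using eq that by (metis restrict_apply')
    then show "\<omega> \<in> PiE N ?fix"
      using \<omega> p(1) by (auto simp: PiE_iff the_inv_into_f_f)
  next
    fix \<omega> assume \<omega>: "\<omega> \<in> PiE N ?fix"
    have "\<omega> (p j) = f j" if "j \<in> J" for j
    proof -
      have "p j \<in> N" "p j \<in> p ` J" using that p(2) by auto
      then have "\<omega> (p j) = f (the_inv_into J p (p j))" using \<omega> by (auto simp: PiE_iff)
      then show ?thesis using the_inv_into_f_f[OF p(1) that] by simp
    qed
    then have "restrict (\<lambda>j. \<omega> (p j)) J = f" using f by (intro ext) (simp add: PiE_iff extensional_def)
    with \<omega> show "\<omega> \<in> {\<omega> \<in> PiE N (\<lambda>_. UNIV::bool set). restrict (\<lambda>j. \<omega> (p j)) J = f}"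
      by (auto simp: PiE_iff)
  qed
  also have "card (PiE N ?fix) = (\<Prod>i\<in>N. card (?fix i))"
    using N by (rule card_PiE)
  also have "\<dots> = (\<Prod>i\<in>N. if i \<in> p ` J then 1 else 2)"
    by (rule prod.cong) auto
  also have "\<dots> = 2 ^ card (N - p ` J)"
    using N by (simp add: prod.If_cases Diff_eq)
  also have "card (N - p ` J) = card N - card J"
    using card_Diff_subset[OF finite_imageI[OF J] p(2)] card_image[OF p(1)] by simp
  finally show ?thesis .
qed

lemma card_colourings_pullback:
  assumes N: "finite N" and p: "inj_on p J" "p ` J \<subseteq> N"
  shows "card {\<omega> \<in> PiE N (\<lambda>_. UNIV::bool set). Q (restrict (\<lambda>j. \<omega> (p j)) J)}
       = card {f \<in> PiE J (\<lambda>_. UNIV::bool set). Q f} * 2 ^ (card N - card J)"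
proof -
  have J: "finite J" using N p finite_image_iff finite_subset by metis
  define fibre where "fibre f = {\<omega> \<in> PiE N (\<lambda>_. UNIV::bool set). restrict (\<lambda>j. \<omega> (p j)) J = f}" for f
  let ?I = "{f \<in> PiE J (\<lambda>_. UNIV::bool set). Q f}"
  have "{\<omega> \<in> PiE N (\<lambda>_. UNIV::bool set). Q (restrict (\<lambda>j. \<omega> (p j)) J)} = (\<Union>f\<in>?I. fibre f)"
    by (auto simp: fibre_def)
  also have "card \<dots> = (\<Sum>f\<in>?I. card (fibre f))"
  proof (rule card_UN_disjoint)
    show "finite ?I" by (rule finite_subset[of _ "PiE J (\<lambda>_. UNIV)"]) (auto intro: finite_PiE J)
    have "finite (fibre f)" for f
      by (rule finite_subset[of _ "PiE N (\<lambda>_. UNIV)"]) (auto simp: fibre_def intro: finite_PiE N)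
    then show "\<forall>f\<in>?I. finite (fibre f)" by blast
  qed (auto simp: fibre_def)
  also have "\<dots> = (\<Sum>f\<in>?I. 2 ^ (card N - card J))"
    unfolding fibre_def using card_colouring_extensions[OF N p] by (intro sum.cong) auto
  finally show ?thesis by simp
qed

lemma card_product_filter:
  assumes "finite A" "finite V"
  shows "card {z \<in> A \<times> V. P z} = (\<Sum>v\<in>V. card {w \<in> A. P (w, v)})"
proof -
  have "{z \<in> A \<times> V. P z} = (\<Union>v\<in>V. (\<lambda>w. (w, v)) ` {w \<in> A. P (w, v)})" by auto
  also have "card \<dots> = (\<Sum>v\<in>V. card ((\<lambda>w. (w, v)) ` {w \<in> A. P (w, v)}))"
    using assms by (intro card_UN_disjoint) auto
  also have "\<dots> = (\<Sum>v\<in>V. card {w \<in> A. P (w, v)})"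
    by (intro sum.cong refl card_image) (auto simp: inj_on_def)
  finally show ?thesis .
qed

lemma tendsto_of_bound_inverse:
  fixes a :: "nat \<Rightarrow> real"
  assumes bound: "\<And>m. m \<ge> r \<Longrightarrow> \<bar>a m - L\<bar> \<le> C * (1 / (real m + 2))"
  shows "a \<longlonglongrightarrow> L"
proof (rule LIM_zero_cancel, rule Lim_null_comparison)
  have "(\<lambda>m. inverse (real (Suc (Suc m)))) \<longlonglongrightarrow> (0::real)"
    using LIMSEQ_Suc[OF LIMSEQ_inverse_real_of_nat] by simp
  then have "(\<lambda>m. 1 / (real m + 2)) \<longlonglongrightarrow> (0::real)"
    by (simp add: divide_inverse add.commute)
  then have "(\<lambda>m. C * (1 / (real m + 2))) \<longlonglongrightarrow> C * 0"
    by (intro tendsto_mult tendsto_const)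
  then show "(\<lambda>m. C * (1 / (real m + 2))) \<longlonglongrightarrow> 0" by simp
  show "\<forall>\<^sub>F m in sequentially. norm (a m - L) \<le> C * (1 / (real m + 2))"
    using bound by (auto simp: eventually_sequentially)
qed

section \<open>The Bernoulli shift as an action of the free group\<close>

text \<open>The group element represented by a word: gamma_i maps to s_i.  The action of a word
  composes from the right, so the element of a word is the product of its letters in
  reverse order.\<close>

definition letter_elem :: "('a, 'b) monoid_scheme \<Rightarrow> (nat \<Rightarrow> 'a) \<Rightarrow> letter \<Rightarrow> 'a" where
  "letter_elem G s a = (if snd a then s (fst a) else inv\<^bsub>G\<^esub> (s (fst a)))"

primrec word_elem :: "('a, 'b) monoid_scheme \<Rightarrow> (nat \<Rightarrow> 'a) \<Rightarrow> letter list \<Rightarrow> 'a" where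
  "word_elem G s [] = \<one>\<^bsub>G\<^esub>"
| "word_elem G s (a # w) = word_elem G s w \<otimes>\<^bsub>G\<^esub> letter_elem G s a"

locale bernoulli_shift = group G for G :: "('a, 'b) monoid_scheme" (structure) +
  fixes e :: "nat \<Rightarrow> 'a" and s :: "nat \<Rightarrow> 'a"
  assumes enum_bij: "bij_betw e UNIV (carrier G)"
    and gens_in: "\<And>i. i \<ge> 1 \<Longrightarrow> s i \<in> carrier G"
begin

definition coord :: "'a \<Rightarrow> nat" where "coord = inv_into UNIV e"

lemma enum_in [simp]: "e k \<in> carrier G"
  using enum_bij by (meson UNIV_I bij_betwE)

lemma enum_inj: "inj e"
  using enum_bij by (simp add: bij_betw_def)

lemma coord_enum [simp]: "coord (e k) = k"
  by (simp add: coord_def enum_inj)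

lemma enum_coord [simp]: "g \<in> carrier G \<Longrightarrow> e (coord g) = g"
  using enum_bij unfolding coord_def by (metis bij_betw_def f_inv_into_f)

lemma coord_inj: "g \<in> carrier G \<Longrightarrow> h \<in> carrier G \<Longrightarrow> coord g = coord h \<Longrightarrow> g = h"
  by (metis enum_coord)

lemma bshift_apply: "bshift G e g x = (\<lambda>k. x (coord (g \<otimes> e k)))"
  by (simp add: bshift_def coord_def)

lemma bshift_comp: "g \<in> carrier G \<Longrightarrow> h \<in> carrier G \<Longrightarrow>
    bshift G e g (bshift G e h x) = bshift G e (h \<otimes> g) x"
  by (simp add: bshift_apply m_assoc)

lemma bshift_one [simp]: "bshift G e \<one> x = x"
  by (simp add: bshift_apply)

lemma bshift_inverse: "g \<in> carrier G \<Longrightarrow> bshift G e g (bshift G e (inv g) x) = x"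
  "g \<in> carrier G \<Longrightarrow> bshift G e (inv g) (bshift G e g x) = x"
  by (simp_all add: bshift_comp)

lemma bshift_bij: "g \<in> carrier G \<Longrightarrow> bij (bshift G e g)"
  by (rule bijI') (metis bshift_inverse)+

lemma inv_bshift: "g \<in> carrier G \<Longrightarrow> inv_into UNIV (bshift G e g) = bshift G e (inv g)"
  by (rule ext) (metis bshift_bij bshift_inverse(1) bij_def inv_f_eq)

lemma letter_elem_in: "fst a \<ge> 1 \<Longrightarrow> letter_elem G s a \<in> carrier G"
  by (simp add: letter_elem_def gens_in)

lemma word_elem_in: "\<forall>a\<in>set u. fst a \<ge> 1 \<Longrightarrow> word_elem G s u \<in> carrier G"
  by (induction u) (auto simp: letter_elem_in)

lemma act_word_bshift:
  "\<forall>a\<in>set u. fst a \<ge> 1 \<Longrightarrow>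
    act_word UNIV (\<lambda>i. bshift G e (s i)) u x = bshift G e (word_elem G s u) x"
proof (induction u)
  case (Cons a u)
  then have "s (fst a) \<in> carrier G" "word_elem G s u \<in> carrier G"
    using gens_in word_elem_in by auto
  with Cons show ?case
    by (cases "snd a") (auto simp: act_letter_def bshift_comp letter_elem_def inv_bshift)
qed simp

text \<open>For g \<noteq> h the points identified by the shifts by g and h are those invariant under
  the fixed-point-free coordinate permutation induced by h g^-1: a null set.\<close>

lemma bshift_coincidence_null:
  assumes g: "g \<in> carrier G" and h: "h \<in> carrier G" and ne: "g \<noteq> h"
  shows "{x. bshift G e g x = bshift G e h x} \<in> sets cantor_measure"
    and "measure cantor_measure {x. bshift G e g x = bshift G e h x} = 0"
proof -
  define \<tau> where "\<tau> i = coord (h \<otimes> inv g \<otimes> e i)" for i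
  have \<tau>_cancel: "\<tau> (coord (g \<otimes> e k)) = coord (h \<otimes> e k)" for k
  proof -
    have "inv g \<otimes> (g \<otimes> e k) = e k" using g by (simp add: m_assoc[symmetric])
    then show ?thesis using g h by (simp add: \<tau>_def m_assoc)
  qed
  have eq: "{x. bshift G e g x = bshift G e h x} = {x::nat \<Rightarrow> bool. \<forall>i. x i = x (\<tau> i)}"
  proof (intro equalityI subsetI CollectI allI; drule CollectD)
    fix x i assume "bshift G e g x = bshift G e h x"
    then have "bshift G e g x (coord (inv g \<otimes> e i)) = bshift G e h x (coord (inv g \<otimes> e i))" by simp
    then show "x i = x (\<tau> i)" using g h by (simp add: bshift_apply \<tau>_def m_assoc[symmetric])
  next
    fix x :: "nat \<Rightarrow> bool" assume inv: "\<forall>i. x i = x (\<tau> i)"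
    show "bshift G e g x = bshift G e h x"
    proof
      fix k
      have "x (coord (g \<otimes> e k)) = x (\<tau> (coord (g \<otimes> e k)))" using inv by blast
      then show "bshift G e g x k = bshift G e h x k" by (simp add: bshift_apply \<tau>_cancel)
    qed
  qed
  have "inj \<tau>"
  proof (rule injI)
    fix i j assume "\<tau> i = \<tau> j"
    then have "h \<otimes> inv g \<otimes> e i = h \<otimes> inv g \<otimes> e j"
      using g h by (intro coord_inj) (auto simp: \<tau>_def)
    then show "i = j" using g h enum_inj by (simp add: m_assoc inj_eq)
  qed
  moreover have "\<tau> i \<noteq> i" for i
  proof
    assume "\<tau> i = i"
    then have "h \<otimes> inv g \<otimes> e i = e i" using g h by (metis \<tau>_def enum_coord m_closed inv_closed enum_in)
    then have "h \<otimes> inv g = \<one>" using g h by simp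
    then show False using ne g h by (metis inv_closed inv_inv inv_equality)
  qed
  ultimately show "{x. bshift G e g x = bshift G e h x} \<in> sets cantor_measure"
    and "measure cantor_measure {x. bshift G e g x = bshift G e h x} = 0"
    unfolding eq using coincidence_set_sets[of id \<tau>] measure_tau_invariant_zero by auto
qed

lemma bshift_coincidence_sets:
  "g \<in> carrier G \<Longrightarrow> h \<in> carrier G \<Longrightarrow> {x. bshift G e g x = bshift G e h x} \<in> sets cantor_measure"
  using sets.top[of cantor_measure] by (cases "g = h") (auto simp: bshift_coincidence_null)

lemma bshift_measurable: "g \<in> carrier G \<Longrightarrow> bshift G e g \<in> cantor_measure \<rightarrow>\<^sub>M cantor_measure"
  unfolding bshift_apply cantor_measure_eq
  by (rule measurable_PiM_single'[where f = "\<lambda>k x. x (coord (g \<otimes> e k))"]) (auto simp: space_PiM)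

text \<open>The shift permutes coordinates, hence preserves the product measure; it suffices to check
  this on finite-dimensional rectangles.\<close>

lemma bshift_distr:
  assumes g: "g \<in> carrier G"
  shows "distr cantor_measure cantor_measure (bshift G e g) = cantor_measure"
proof -
  define \<pi> where "\<pi> k = coord (g \<otimes> e k)" for k
  define \<pi>' where "\<pi>' k = coord (inv g \<otimes> e k)" for k
  have \<pi>'_\<pi>: "\<pi>' (\<pi> k) = k" for k
  proof -
    have "inv g \<otimes> (g \<otimes> e k) = e k" using g by (simp add: m_assoc[symmetric])
    then show ?thesis using g by (simp add: \<pi>_def \<pi>'_def)
  qed
  have inj_\<pi>: "inj_on \<pi> J" for J by (metis inj_onI \<pi>'_\<pi>)
  have meas: "bshift G e g \<in> PiM UNIV coin \<rightarrow>\<^sub>M PiM UNIV coin"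
    using bshift_measurable[OF g] by (simp add: cantor_measure_eq)
  show ?thesis
    unfolding cantor_measure_eq
  proof (rule coins.PiM_eq)
    fix J :: "nat set" and F assume J: "finite J" "J \<subseteq> UNIV" and F: "\<And>j. j \<in> J \<Longrightarrow> F j \<in> sets (coin j)"
    have rect: "prod_emb UNIV coin J (PiE J F) \<in> sets (PiM UNIV coin)"
      using J F by (intro measurable_prod_emb sets_PiM_I_finite) auto
    have "bshift G e g -` prod_emb UNIV coin J (PiE J F) \<inter> space (PiM UNIV coin)
        = {x \<in> space (PiM UNIV coin). \<forall>i\<in>\<pi> ` J. x i \<in> F (\<pi>' i)}"
      by (auto simp: prod_emb_def space_PiM bshift_apply \<pi>_def[symmetric] \<pi>'_\<pi> PiE_iff)
    then have "emeasure (distr (PiM UNIV coin) (PiM UNIV coin) (bshift G e g)) (prod_emb UNIV coin J (PiE J F))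
        = emeasure (PiM UNIV coin) {x \<in> space (PiM UNIV coin). \<forall>i\<in>\<pi> ` J. x i \<in> F (\<pi>' i)}"
      by (simp add: emeasure_distr[OF meas rect])
    also have "\<dots> = (\<Prod>i\<in>\<pi> ` J. emeasure (coin i) (F (\<pi>' i)))"
      using J by (intro coins.emeasure_PiM_Collect) auto
    also have "\<dots> = (\<Prod>j\<in>J. emeasure (coin j) (F j))"
      by (simp add: prod.reindex[OF inj_\<pi>] \<pi>'_\<pi>)
    finally show "emeasure (distr (PiM UNIV coin) (PiM UNIV coin) (bshift G e g)) (prod_emb UNIV coin J (PiE J F))
        = (\<Prod>j\<in>J. emeasure (coin j) (F j))" .
  qed simp
qed

lemma measure_preserving_shift_action: "mp_borel_action (\<lambda>i. bshift G e (s i))"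
  unfolding mp_borel_action_def mpres_def
  using gens_in by (auto simp: bshift_bij inv_bshift bshift_measurable bshift_distr)

text \<open>Since the s_i generate the group, every group element is represented by a word, so the
  orbit relation of the free group action is the orbit relation of the shift.\<close>

lemma word_elem_append:
  "\<forall>a\<in>set u. fst a \<ge> 1 \<Longrightarrow> \<forall>a\<in>set w. fst a \<ge> 1 \<Longrightarrow>
    word_elem G s (u @ w) = word_elem G s w \<otimes> word_elem G s u"
  by (induction u) (auto simp: word_elem_in letter_elem_in m_assoc)

lemma generated_by_word:
  "g \<in> generate G (s ` {1..}) \<Longrightarrow> \<exists>w. (\<forall>a\<in>set w. fst a \<ge> 1) \<and> word_elem G s w = g"
proof (induction rule: generate.induct)
  case one
  show ?case by (rule exI[of _ "[]"]) simp
next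
  case (incl h)
  then obtain i where "i \<ge> 1" "h = s i" by auto
  then show ?case using gens_in by (intro exI[of _ "[(i, True)]"]) (simp add: letter_elem_def)
next
  case (inv h)
  then obtain i where "i \<ge> 1" "h = s i" by auto
  then show ?case using gens_in by (intro exI[of _ "[(i, False)]"]) (simp add: letter_elem_def)
next
  case (eng h1 h2)
  then obtain w1 w2 where "\<forall>a\<in>set w1. fst a \<ge> 1" "word_elem G s w1 = h1"
      "\<forall>a\<in>set w2. fst a \<ge> 1" "word_elem G s w2 = h2"
    by blast
  then show ?case using word_elem_append[of w2 w1] by (intro exI[of _ "w2 @ w1"]) auto
qed

lemma orbit_rel_shift:
  assumes gen: "generate G (s ` {1..}) = carrier G"
  shows "orbit_rel (\<lambda>i. bshift G e (s i)) = {(x, y). \<exists>g\<in>carrier G. y = bshift G e g x}"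
proof (intro equalityI subsetI)
  fix p assume "p \<in> orbit_rel (\<lambda>i. bshift G e (s i))"
  then obtain x w where "p = (x, act_word UNIV (\<lambda>i. bshift G e (s i)) w x)" "\<forall>a\<in>set w. fst a \<ge> 1"
    by (auto simp: orbit_rel_def)
  then show "p \<in> {(x, y). \<exists>g\<in>carrier G. y = bshift G e g x}"
    using act_word_bshift word_elem_in by auto
next
  fix p assume "p \<in> {(x, y). \<exists>g\<in>carrier G. y = bshift G e g x}"
  then obtain x g where p: "p = (x, bshift G e g x)" "g \<in> carrier G" by auto
  then obtain w where "\<forall>a\<in>set w. fst a \<ge> 1" "word_elem G s w = g"
    using generated_by_word gen by blast
  then show "p \<in> orbit_rel (\<lambda>i. bshift G e (s i))"
    using p act_word_bshift by (auto simp: orbit_rel_def)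
qed

end

section \<open>Local statistics of the Bernoulli shift\<close>

context bernoulli_shift
begin

text \<open>Which pairs of short words move x to the same point, and which pairs represent the same
  group element.  A point is free (up to radius r) when the two patterns agree.\<close>

definition shift_pattern :: "nat \<Rightarrow> (nat \<Rightarrow> bool) \<Rightarrow> (letter list \<times> letter list) set" where
  "shift_pattern r x = {(u, u'). u \<in> short_words r \<and> u' \<in> short_words r \<and>
     bshift G e (word_elem G s u) x = bshift G e (word_elem G s u') x}"

definition group_pattern :: "nat \<Rightarrow> (letter list \<times> letter list) set" where
  "group_pattern r = {(u, u'). u \<in> short_words r \<and> u' \<in> short_words r \<and>
     word_elem G s u = word_elem G s u'}"

text \<open>The labels seen in the ball of radius r are the coordinates g(w) e_k with w reduced and
  k < r; these group elements and their coordinates are finite in number.\<close>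

definition label_elems :: "nat \<Rightarrow> 'a set" where
  "label_elems r = (\<lambda>(w, k). word_elem G s w \<otimes> e k) ` (reduced_words r \<times> {..<r})"

definition label_coords :: "nat \<Rightarrow> nat set" where
  "label_coords r = coord ` label_elems r"

abbreviation shift_ball :: "nat \<Rightarrow> (nat \<Rightarrow> bool) \<Rightarrow> (nat \<Rightarrow> bool) rgraph" where
  "shift_ball r x \<equiv> ball_graph r UNIV (\<lambda>i. bshift G e (s i)) (\<lambda>x. x) x"

definition ball_type :: "nat \<Rightarrow> 'v rgraph \<Rightarrow> (nat \<Rightarrow> bool) \<Rightarrow> bool" where
  "ball_type r \<alpha> f \<longleftrightarrow> (\<exists>x. shift_pattern r x = group_pattern r \<and>
     restrict x (label_coords r) = f \<and> rgraph_iso (shift_ball r x) \<alpha>)"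

lemma finite_label_elems: "finite (label_elems r)"
  unfolding label_elems_def using finite_reduced_words by simp

lemma finite_label_coords: "finite (label_coords r)"
  unfolding label_coords_def using finite_label_elems by simp

lemma label_elems_in: "c \<in> label_elems r \<Longrightarrow> c \<in> carrier G"
  unfolding label_elems_def using word_elem_in reduced_words_letters by auto

lemma shift_pattern_subset: "shift_pattern r x \<subseteq> short_words r \<times> short_words r"
  by (auto simp: shift_pattern_def)

lemma act_word_coincide_iff:
  "u \<in> short_words r \<Longrightarrow> u' \<in> short_words r \<Longrightarrow>
    act_word UNIV (\<lambda>i. bshift G e (s i)) u x = act_word UNIV (\<lambda>i. bshift G e (s i)) u' x
      \<longleftrightarrow> (u, u') \<in> shift_pattern r x"
  using act_word_bshift short_words_letters by (simp add: shift_pattern_def)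

lemma shift_ball_iso:
  assumes "shift_pattern r x = shift_pattern r x'"
    and "restrict x (label_coords r) = restrict x' (label_coords r)"
  shows "rgraph_iso (shift_ball r x) (shift_ball r x')"
proof (rule ball_iso_of_coincidences)
  show "act_word UNIV (\<lambda>i. bshift G e (s i)) u x = act_word UNIV (\<lambda>i. bshift G e (s i)) u' x
      \<longleftrightarrow> act_word UNIV (\<lambda>i. bshift G e (s i)) u x' = act_word UNIV (\<lambda>i. bshift G e (s i)) u' x'"
    if "u \<in> short_words r" "u' \<in> short_words r" for u u'
    using act_word_coincide_iff[OF that] assms(1) by simp
next
  fix w k assume w: "w \<in> reduced_words r" and k: "k < r"
  have "coord (word_elem G s w \<otimes> e k) \<in> label_coords r"
    unfolding label_coords_def label_elems_def using w k by auto
  then have "x (coord (word_elem G s w \<otimes> e k)) = x' (coord (word_elem G s w \<otimes> e k))"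
    using assms(2) by (metis restrict_apply')
  then show "act_word UNIV (\<lambda>i. bshift G e (s i)) w x' k = act_word UNIV (\<lambda>i. bshift G e (s i)) w x k"
    using act_word_bshift[OF reduced_words_letters[OF w]] by (simp add: bshift_apply)
qed

lemma AE_free: "AE x in cantor_measure. shift_pattern r x = group_pattern r"
proof -
  let ?D = "{(u, u'). u \<in> short_words r \<and> u' \<in> short_words r \<and> word_elem G s u \<noteq> word_elem G s u'}"
  have "countable ?D"
    by (rule countable_finite, rule finite_subset[of _ "short_words r \<times> short_words r"])
       (auto simp: finite_short_words)
  moreover have "AE x in cantor_measure. bshift G e (word_elem G s u) x \<noteq> bshift G e (word_elem G s u') x"
    if "(u, u') \<in> ?D" for u u'
  proof -
    let ?N = "{x. bshift G e (word_elem G s u) x = bshift G e (word_elem G s u') x}"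
    have g: "word_elem G s u \<in> carrier G" "word_elem G s u' \<in> carrier G" "word_elem G s u \<noteq> word_elem G s u'"
      using that word_elem_in short_words_letters by auto
    have "?N \<in> null_sets cantor_measure"
    proof (rule null_setsI)
      show "?N \<in> sets cantor_measure" using bshift_coincidence_null(1)[OF g] .
      show "emeasure cantor_measure ?N = 0"
        using bshift_coincidence_null(2)[OF g]
          finite_measure.emeasure_eq_measure[OF prob_space.finite_measure[OF prob_space_cantor_measure]]
        by simp
    qed
    from AE_not_in[OF this] show ?thesis by simp
  qed
  ultimately have "AE x in cantor_measure. \<forall>p\<in>?D. bshift G e (word_elem G s (fst p)) x \<noteq> bshift G e (word_elem G s (snd p)) x"
    by (subst AE_ball_countable) auto
  then show ?thesis
  proof (rule AE_mp, intro AE_I2 impI)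
    fix x assume "\<forall>p\<in>?D. bshift G e (word_elem G s (fst p)) x \<noteq> bshift G e (word_elem G s (snd p)) x"
    then show "shift_pattern r x = group_pattern r"
      unfolding shift_pattern_def group_pattern_def by auto
  qed
qed

lemma shift_pattern_sets:
  "{x. \<forall>p\<in>short_words r \<times> short_words r. p \<in> shift_pattern r x \<longleftrightarrow> p \<in> P} \<in> sets cantor_measure"
proof -
  let ?E = "\<lambda>p. {x. bshift G e (word_elem G s (fst p)) x = bshift G e (word_elem G s (snd p)) x}"
  have E: "?E p \<in> sets cantor_measure" if "p \<in> short_words r \<times> short_words r" for p
    using that by (intro bshift_coincidence_sets word_elem_in) (auto simp: short_words_def)
  have "{x. \<forall>p\<in>short_words r \<times> short_words r. p \<in> shift_pattern r x \<longleftrightarrow> p \<in> P}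
      = (\<Inter>p\<in>short_words r \<times> short_words r. if p \<in> P then ?E p else UNIV - ?E p)"
  proof -
    have "p \<in> shift_pattern r x \<longleftrightarrow> x \<in> ?E p" if "p \<in> short_words r \<times> short_words r" for p x
      using that by (auto simp: shift_pattern_def)
    moreover have "x \<in> (if p \<in> P then ?E p else UNIV - ?E p) \<longleftrightarrow> (x \<in> ?E p \<longleftrightarrow> p \<in> P)" for x p
      by auto
    ultimately show ?thesis
      unfolding set_eq_iff INT_iff mem_Collect_eq by blast
  qed
  also have "\<dots> \<in> sets cantor_measure"
  proof (rule sets.countable_INT'')
    show "UNIV \<in> sets cantor_measure" using sets.top[of cantor_measure] by simp
    show "countable (short_words r \<times> short_words r)" using finite_short_words by (simp add: countable_finite)
    fix p assume p: "p \<in> short_words r \<times> short_words r"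
    then show "(if p \<in> P then ?E p else UNIV - ?E p) \<in> sets cantor_measure"
      using E[OF p] sets.compl_sets[OF E[OF p]] by simp
  qed
  finally show ?thesis .
qed

text \<open>The set of points whose ball has type alpha is a finite union of sets with prescribed
  pattern and prescribed colours at the label coordinates, hence measurable.\<close>

lemma shift_ball_type_sets: "{x. rgraph_iso (shift_ball r x) \<alpha>} \<in> sets cantor_measure"
proof -
  let ?J = "label_coords r"
  let ?A = "{(P, f). \<exists>x. shift_pattern r x = P \<and> restrict x ?J = f \<and> rgraph_iso (shift_ball r x) \<alpha>}"
  let ?S = "\<lambda>P. {x. \<forall>p\<in>short_words r \<times> short_words r. p \<in> shift_pattern r x \<longleftrightarrow> p \<in> P}"
  have fin: "finite ?A"
  proof (rule finite_subset)
    show "?A \<subseteq> Pow (short_words r \<times> short_words r) \<times> PiE ?J (\<lambda>_. UNIV)"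
      using shift_pattern_subset by auto
    show "finite (Pow (short_words r \<times> short_words r) \<times> PiE ?J (\<lambda>_. UNIV::bool set))"
      using finite_short_words finite_label_coords by (auto intro!: finite_PiE)
  qed
  have "{x. rgraph_iso (shift_ball r x) \<alpha>} = (\<Union>(P, f)\<in>?A. ?S P \<inter> {x. restrict x ?J = f})"
  proof (intro equalityI subsetI)
    fix x assume "x \<in> {x. rgraph_iso (shift_ball r x) \<alpha>}"
    then have "(shift_pattern r x, restrict x ?J) \<in> ?A" by auto
    then show "x \<in> (\<Union>(P, f)\<in>?A. ?S P \<inter> {x. restrict x ?J = f})" by blast
  next
    fix x assume "x \<in> (\<Union>(P, f)\<in>?A. ?S P \<inter> {x. restrict x ?J = f})"
    then obtain P f x' where "x \<in> ?S P" "restrict x ?J = f" "shift_pattern r x' = P"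
        "restrict x' ?J = f" and x': "rgraph_iso (shift_ball r x') \<alpha>"
      by blast
    then have "x \<in> ?S (shift_pattern r x')" "restrict x ?J = restrict x' ?J" by auto
    moreover from this(1) have "shift_pattern r x = shift_pattern r x'"
      using shift_pattern_subset[of r x] shift_pattern_subset[of r x'] by blast
    ultimately have "rgraph_iso (shift_ball r x) (shift_ball r x')"
      by (intro shift_ball_iso) auto
    then show "x \<in> {x. rgraph_iso (shift_ball r x) \<alpha>}" using x' rgraph_iso_trans by blast
  qed
  also have "\<dots> \<in> sets cantor_measure"
  proof (rule sets.finite_UN[OF fin], clarify)
    fix P f
    have "{x. restrict x ?J = f} \<in> sets cantor_measure"
      using cylinder_sets[OF finite_label_coords, of "\<lambda>g. g = f"] by simp
    then show "?S P \<inter> {x. restrict x ?J = f} \<in> sets cantor_measure"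
      using shift_pattern_sets[of r P] by auto
  qed
  finally show ?thesis .
qed

lemma p_meas_shift:
  "p_meas r (\<lambda>i. bshift G e (s i)) \<alpha>
     = card {f \<in> PiE (label_coords r) (\<lambda>_. UNIV). ball_type r \<alpha> f} / 2 ^ card (label_coords r)"
proof -
  let ?J = "label_coords r"
  have "p_meas r (\<lambda>i. bshift G e (s i)) \<alpha> = measure cantor_measure {x. rgraph_iso (shift_ball r x) \<alpha>}"
    by (simp add: p_meas_def)
  also have "\<dots> = measure cantor_measure {x. ball_type r \<alpha> (restrict x ?J)}"
  proof (rule measure_eq_AE)
    show "AE x in cantor_measure. x \<in> {x. rgraph_iso (shift_ball r x) \<alpha>} \<longleftrightarrow> x \<in> {x. ball_type r \<alpha> (restrict x ?J)}"
      using AE_free[of r]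
    proof (rule AE_mp, intro AE_I2 impI)
      fix x assume free: "shift_pattern r x = group_pattern r"
      show "x \<in> {x. rgraph_iso (shift_ball r x) \<alpha>} \<longleftrightarrow> x \<in> {x. ball_type r \<alpha> (restrict x ?J)}"
      proof
        assume "x \<in> {x. ball_type r \<alpha> (restrict x ?J)}"
        then obtain x' where x': "shift_pattern r x' = group_pattern r" "restrict x' ?J = restrict x ?J"
            "rgraph_iso (shift_ball r x') \<alpha>"
          by (auto simp: ball_type_def)
        have "rgraph_iso (shift_ball r x) (shift_ball r x')" using free x' by (intro shift_ball_iso) auto
        then show "x \<in> {x. rgraph_iso (shift_ball r x) \<alpha>}" using x'(3) rgraph_iso_trans by blast
      qed (use free in \<open>auto simp: ball_type_def\<close>)
    qed
  qed (auto intro: shift_ball_type_sets cylinder_sets[OF finite_label_coords])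
  also have "\<dots> = card {f \<in> PiE ?J (\<lambda>_. UNIV). ball_type r \<alpha> f} / 2 ^ card ?J"
    by (rule cylinder_measure[OF finite_label_coords])
  finally show ?thesis .
qed

text \<open>Every colouring of the label coordinates occurs at some free point, since a cylinder of
  positive measure cannot be contained in the null set of non-free points.\<close>

lemma free_point_with_colouring:
  assumes f: "f \<in> PiE (label_coords r) (\<lambda>_. UNIV)"
  shows "\<exists>x. shift_pattern r x = group_pattern r \<and> restrict x (label_coords r) = f"
proof (rule ccontr)
  let ?J = "label_coords r"
  let ?N = "{x. restrict x ?J = f}"
  assume no_free: "\<not> ?thesis"
  have "AE x in cantor_measure. restrict x ?J \<noteq> f"
    using AE_free[of r] by (rule AE_mp) (use no_free in auto)
  moreover have N: "?N \<in> sets cantor_measure"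
    using cylinder_sets[OF finite_label_coords, of "\<lambda>g. g = f"] by simp
  ultimately have "measure cantor_measure ?N = 0"
    using AE_iff_measurable[OF N, of "\<lambda>x. restrict x ?J \<noteq> f"] by (simp add: measure_def)
  moreover have "{g \<in> PiE ?J (\<lambda>_. UNIV). g = f} = {f}" using f by auto
  then have "measure cantor_measure ?N = 1 / 2 ^ card ?J"
    using cylinder_measure[OF finite_label_coords, of "\<lambda>g. g = f" r] by simp
  ultimately show False by simp
qed

end

section \<open>Finite models from a sofic approximation\<close>

lemma card_multiplicativity_failures:
  assumes c: "c permutes {..<n}"
    and fixed: "real (card {k\<in>{..<n}. (f \<circ> g \<circ> inv_into UNIV c) k = k}) \<ge> (1 - \<epsilon>) * real n"
  shows "real (card {v\<in>{..<n}. f (g v) \<noteq> c v}) \<le> \<epsilon> * real n"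
proof -
  let ?E = "{v\<in>{..<n}. f (g v) = c v}"
  let ?F = "{k\<in>{..<n}. (f \<circ> g \<circ> inv_into UNIV c) k = k}"
  have "c ` ?E = ?F"
  proof (intro equalityI subsetI)
    fix k assume "k \<in> c ` ?E"
    then obtain v where "v \<in> ?E" "k = c v" by blast
    then show "k \<in> ?F" using permutes_inverses(2)[OF c] permutes_in_image[OF c] by auto
  next
    fix k assume k: "k \<in> ?F"
    have "c (inv_into UNIV c k) = k" using permutes_inverses(1)[OF c] by simp
    moreover have "inv_into UNIV c k < n" using k permutes_in_image[OF permutes_inv[OF c]] by auto
    ultimately show "k \<in> c ` ?E" using k by (auto intro!: image_eqI[of _ _ "inv_into UNIV c k"])
  qed
  then have "card ?F = card ?E"
    using card_image[OF inj_on_subset[OF permutes_inj[OF c] subset_UNIV]] by metis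
  moreover have "card {v\<in>{..<n}. f (g v) \<noteq> c v} = n - card ?E"
  proof -
    have "{v\<in>{..<n}. f (g v) \<noteq> c v} = {..<n} - ?E" by auto
    then show ?thesis using card_Diff_subset[of ?E "{..<n}"] by auto
  qed
  moreover have "card ?E \<le> n" using card_mono[of "{..<n}" ?E] by auto
  ultimately show ?thesis using fixed by (simp add: of_nat_diff algebra_simps)
qed

context bernoulli_shift
begin

text \<open>The finite set of group elements on which the sofic approximation has to be
  multiplicative and free so that the finite model reproduces balls of radius r: inverses of
  the elements of short words and of label elements, generators, and their pairwise products.\<close>

definition ball_elems :: "nat \<Rightarrow> 'a set" where
  "ball_elems r = (\<lambda>u. inv (word_elem G s u)) ` short_words r \<union> (\<lambda>c. inv c) ` label_elems r"

definition basic_elems :: "nat \<Rightarrow> 'a set" where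
  "basic_elems r = ball_elems r \<union> (\<lambda>d. inv d) ` ball_elems r \<union> s ` {1..r}
     \<union> (\<lambda>i. inv (s i)) ` {1..r} \<union> (\<lambda>k. inv (e k)) ` {..<r}"

definition control_set :: "nat \<Rightarrow> 'a set" where
  "control_set r = basic_elems r \<union> (\<lambda>(a, b). a \<otimes> b) ` (basic_elems r \<times> basic_elems r)"

lemma ball_elems_in: "d \<in> ball_elems r \<Longrightarrow> d \<in> carrier G"
  unfolding ball_elems_def using word_elem_in short_words_letters label_elems_in by auto

lemma basic_elems_in: "b \<in> basic_elems r \<Longrightarrow> b \<in> carrier G"
  unfolding basic_elems_def using ball_elems_in gens_in by auto

lemma control_set_in: "b \<in> control_set r \<Longrightarrow> b \<in> carrier G"
  unfolding control_set_def using basic_elems_in by auto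

lemma finite_control_set: "finite (control_set r)"
  unfolding control_set_def basic_elems_def ball_elems_def
  using finite_short_words finite_label_elems by simp

lemma basic_in_control: "b \<in> basic_elems r \<Longrightarrow> b \<in> control_set r"
  by (simp add: control_set_def)

lemma product_in_control: "a \<in> basic_elems r \<Longrightarrow> b \<in> basic_elems r \<Longrightarrow> a \<otimes> b \<in> control_set r"
  by (auto simp: control_set_def)

lemma ball_elems_basic: "d \<in> ball_elems r \<Longrightarrow> d \<in> basic_elems r" "d \<in> ball_elems r \<Longrightarrow> inv d \<in> basic_elems r"
  by (simp_all add: basic_elems_def)

lemma generators_basic: "i \<in> {1..r} \<Longrightarrow> s i \<in> basic_elems r" "i \<in> {1..r} \<Longrightarrow> inv (s i) \<in> basic_elems r"
  by (simp_all add: basic_elems_def)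

lemma enum_inv_basic: "k < r \<Longrightarrow> inv (e k) \<in> basic_elems r"
  by (simp add: basic_elems_def)

lemma word_inv_ball_elem: "u \<in> short_words r \<Longrightarrow> inv (word_elem G s u) \<in> ball_elems r"
  by (simp add: ball_elems_def)

lemma label_coord_ball_elem: "j \<in> label_coords r \<Longrightarrow> inv (e j) \<in> ball_elems r"
  unfolding label_coords_def ball_elems_def using label_elems_in by auto

end

text \<open>The finite model attached to a map phi from the group to permutations of {0..<n}: the
  set {0,1}^n x {0..<n}, on which gamma_i acts by phi(s_i^-1) on the second coordinate, and the
  k-th label of (w, v) is the colour w(phi(e_k^-1)(v)).\<close>

locale sofic_model = bernoulli_shift G e s for G :: "('a, 'b) monoid_scheme" (structure) and e s +
  fixes n :: nat and \<phi> :: "'a \<Rightarrow> nat \<Rightarrow> nat"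
  assumes phi_permutes: "\<And>g. g \<in> carrier G \<Longrightarrow> \<phi> g permutes {..<n}"
    and phi_one: "\<phi> \<one> = id"
begin

definition colourings :: "(nat \<Rightarrow> bool) set" where
  "colourings = PiE {..<n} (\<lambda>_. UNIV)"

definition model_space :: "((nat \<Rightarrow> bool) \<times> nat) set" where
  "model_space = colourings \<times> {..<n}"

definition model_act :: "nat \<Rightarrow> (nat \<Rightarrow> bool) \<times> nat \<Rightarrow> (nat \<Rightarrow> bool) \<times> nat" where
  "model_act i z = (fst z, \<phi> (inv (s i)) (snd z))"

definition model_label :: "(nat \<Rightarrow> bool) \<times> nat \<Rightarrow> nat \<Rightarrow> bool" where
  "model_label z k = fst z (\<phi> (inv (e k)) (snd z))"

abbreviation model_ball :: "nat \<Rightarrow> (nat \<Rightarrow> bool) \<times> nat \<Rightarrow> ((nat \<Rightarrow> bool) \<times> nat) rgraph" where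
  "model_ball r z \<equiv> ball_graph r model_space model_act model_label z"

definition good :: "nat \<Rightarrow> nat \<Rightarrow> bool" where
  "good r v \<longleftrightarrow> v < n \<and> (\<forall>a\<in>control_set r. \<forall>b\<in>control_set r. \<phi> a (\<phi> b v) = \<phi> (a \<otimes> b) v)
     \<and> (\<forall>a\<in>control_set r. a \<noteq> \<one> \<longrightarrow> \<phi> a v \<noteq> v)"

lemma finite_colourings: "finite colourings"
  by (simp add: colourings_def finite_PiE)

lemma card_colourings: "card colourings = 2 ^ n"
  by (simp add: colourings_def card_PiE)

lemma model_act_pair [simp]: "model_act i (w, x) = (w, \<phi> (inv (s i)) x)"
  by (simp add: model_act_def)

lemma phi_less: "g \<in> carrier G \<Longrightarrow> v < n \<Longrightarrow> \<phi> g v < n"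
  using permutes_in_image[OF phi_permutes] by auto

lemma model_act_bij: "i \<ge> 1 \<Longrightarrow> bij_betw (model_act i) model_space model_space"
proof -
  assume "i \<ge> 1"
  then have "\<phi> (inv (s i)) permutes {..<n}" using phi_permutes gens_in by simp
  then have "bij_betw (\<phi> (inv (s i))) {..<n} {..<n}" by (rule permutes_imp_bij)
  then have "bij_betw (map_prod id (\<phi> (inv (s i)))) (colourings \<times> {..<n}) (colourings \<times> {..<n})"
    using bij_betw_id by (rule bij_betw_map_prod[rotated])
  moreover have "map_prod id (\<phi> (inv (s i))) = model_act i"
    by (auto simp: model_act_def map_prod_def)
  ultimately show ?thesis unfolding model_space_def by simp
qed

lemma good_separates:
  assumes good: "good r v" and d: "d \<in> ball_elems r" "d' \<in> ball_elems r" and eq: "\<phi> d v = \<phi> d' v"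
  shows "d = d'"
proof -
  have in_G: "d \<in> carrier G" "d' \<in> carrier G" using d ball_elems_in by auto
  have ctrl: "inv d' \<in> control_set r" "d \<in> control_set r" "d' \<in> control_set r" "inv d' \<otimes> d \<in> control_set r"
    using d by (auto intro: basic_in_control product_in_control ball_elems_basic)
  have "\<phi> (inv d' \<otimes> d) v = \<phi> (inv d') (\<phi> d v)" using good ctrl by (simp add: good_def)
  also have "\<dots> = \<phi> (inv d') (\<phi> d' v)" using eq by simp
  also have "\<dots> = \<phi> (inv d' \<otimes> d') v" using good ctrl by (simp add: good_def)
  also have "\<dots> = v" using in_G by (simp add: phi_one)
  finally have "inv d' \<otimes> d = \<one>" using good ctrl by (auto simp: good_def)
  then show ?thesis using in_G by (metis inv_closed inv_inv inv_equality)
qed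

lemma model_act_word:
  assumes good: "good r v" and w: "w \<in> colourings" and u: "u \<in> short_words r"
  shows "act_word model_space model_act u (w, v) = (w, \<phi> (inv (word_elem G s u)) v)"
  using u
proof (induction u)
  case Nil
  then show ?case by (simp add: phi_one)
next
  case (Cons a u)
  have u: "u \<in> short_words r" and a: "fst a \<in> {1..r}" using Cons.prems by (auto simp: short_words_def)
  have IH: "act_word model_space model_act u (w, v) = (w, \<phi> (inv (word_elem G s u)) v)"
    using Cons.IH u by simp
  have in_G: "word_elem G s u \<in> carrier G" "s (fst a) \<in> carrier G"
    using word_elem_in short_words_letters u gens_in a by auto
  have u_ball: "inv (word_elem G s u) \<in> ball_elems r" using word_inv_ball_elem[OF u] .
  have ctrl: "inv (word_elem G s u) \<in> control_set r" "inv (s (fst a)) \<in> control_set r"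
    "s (fst a) \<otimes> inv (word_elem G s u) \<in> control_set r"
    using basic_in_control[OF ball_elems_basic(1)[OF u_ball]] basic_in_control[OF generators_basic(2)[OF a]]
      product_in_control[OF generators_basic(1)[OF a] ball_elems_basic(1)[OF u_ball]] .
  have mult: "\<phi> a' (\<phi> b v) = \<phi> (a' \<otimes> b) v" if "a' \<in> control_set r" "b \<in> control_set r" for a' b
    using good that by (simp add: good_def)
  show ?case
  proof (cases "snd a")
    case True
    have "inv (word_elem G s u \<otimes> s (fst a)) = inv (s (fst a)) \<otimes> inv (word_elem G s u)"
      using in_G by (simp add: inv_mult_group)
    then show ?thesis using True IH mult[OF ctrl(2,1)] by (simp add: act_letter_def letter_elem_def)
  next
    case False
    let ?y = "(w, \<phi> (s (fst a) \<otimes> inv (word_elem G s u)) v)"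
    have "\<phi> (inv (s (fst a))) (\<phi> (s (fst a) \<otimes> inv (word_elem G s u)) v)
        = \<phi> (inv (s (fst a)) \<otimes> (s (fst a) \<otimes> inv (word_elem G s u))) v"
      using mult[OF ctrl(2,3)] .
    also have "inv (s (fst a)) \<otimes> (s (fst a) \<otimes> inv (word_elem G s u)) = inv (word_elem G s u)"
      using in_G by (simp add: m_assoc[symmetric])
    finally have "model_act (fst a) ?y = (w, \<phi> (inv (word_elem G s u)) v)" by simp
    moreover have "?y \<in> model_space" using w good in_G by (simp add: model_space_def good_def phi_less)
    moreover have "inj_on (model_act (fst a)) model_space"
      using model_act_bij[of "fst a"] a by (simp add: bij_betw_def)
    ultimately have "inv_into model_space (model_act (fst a)) (w, \<phi> (inv (word_elem G s u)) v) = ?y"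
      by (metis inv_into_f_f)
    moreover have "inv (word_elem G s u \<otimes> inv (s (fst a))) = s (fst a) \<otimes> inv (word_elem G s u)"
      using in_G by (simp add: inv_mult_group)
    ultimately show ?thesis using False IH by (simp add: act_letter_def letter_elem_def)
  qed
qed

definition seen_colouring :: "nat \<Rightarrow> nat \<Rightarrow> (nat \<Rightarrow> bool) \<Rightarrow> nat \<Rightarrow> bool" where
  "seen_colouring r v w = restrict (\<lambda>j. w (\<phi> (inv (e j)) v)) (label_coords r)"

lemma model_coincidence_iff:
  assumes good: "good r v" and w: "w \<in> colourings" and x: "shift_pattern r x = group_pattern r"
    and u: "u \<in> short_words r" "u' \<in> short_words r"
  shows "act_word model_space model_act u (w, v) = act_word model_space model_act u' (w, v)
      \<longleftrightarrow> act_word UNIV (\<lambda>i. bshift G e (s i)) u x = act_word UNIV (\<lambda>i. bshift G e (s i)) u' x"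
proof -
  have "act_word model_space model_act u (w, v) = act_word model_space model_act u' (w, v)
      \<longleftrightarrow> \<phi> (inv (word_elem G s u)) v = \<phi> (inv (word_elem G s u')) v"
    using model_act_word[OF good w u(1)] model_act_word[OF good w u(2)] by simp
  also have "\<dots> \<longleftrightarrow> inv (word_elem G s u) = inv (word_elem G s u')"
    using good_separates[OF good word_inv_ball_elem[OF u(1)] word_inv_ball_elem[OF u(2)]] by auto
  also have "\<dots> \<longleftrightarrow> word_elem G s u = word_elem G s u'"
    using u word_elem_in short_words_letters by (metis inv_inv)
  also have "\<dots> \<longleftrightarrow> act_word UNIV (\<lambda>i. bshift G e (s i)) u x = act_word UNIV (\<lambda>i. bshift G e (s i)) u' x"
    using act_word_coincide_iff[OF u] x u by (simp add: group_pattern_def)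
  finally show ?thesis .
qed

lemma model_labels_agree:
  assumes good: "good r v" and w: "w \<in> colourings"
    and x: "restrict x (label_coords r) = seen_colouring r v w"
    and w': "w' \<in> reduced_words r" and k: "k < r"
  shows "act_word UNIV (\<lambda>i. bshift G e (s i)) w' x k = model_label (act_word model_space model_act w' (w, v)) k"
proof -
  have w'_short: "w' \<in> short_words r" using w' reduced_words_subset_short_words by blast
  have g: "word_elem G s w' \<in> carrier G" using word_elem_in reduced_words_letters w' by blast
  define c where "c = word_elem G s w' \<otimes> e k"
  have "c \<in> label_elems r" unfolding c_def label_elems_def using w' k by auto
  then have c: "c \<in> carrier G" "coord c \<in> label_coords r"
    using label_elems_in by (auto simp: label_coords_def)
  have "act_word UNIV (\<lambda>i. bshift G e (s i)) w' x k = x (coord c)"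
    using act_word_bshift[OF reduced_words_letters[OF w']] by (simp add: bshift_apply c_def)
  also have "\<dots> = w (\<phi> (inv c) v)"
    using fun_cong[OF x, of "coord c"] c by (simp add: seen_colouring_def)
  also have "inv c = inv (e k) \<otimes> inv (word_elem G s w')" using g by (simp add: c_def inv_mult_group)
  also have "\<phi> (inv (e k) \<otimes> inv (word_elem G s w')) v = \<phi> (inv (e k)) (\<phi> (inv (word_elem G s w')) v)"
    using good k word_inv_ball_elem[OF w'_short]
    by (simp add: good_def basic_in_control enum_inv_basic ball_elems_basic)
  also have "w \<dots> = model_label (act_word model_space model_act w' (w, v)) k"
    using model_act_word[OF good w w'_short] by (simp add: model_label_def)
  finally show ?thesis .
qed

lemma model_ball_iso:
  assumes good: "good r v" and w: "w \<in> colourings"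
    and x: "shift_pattern r x = group_pattern r" "restrict x (label_coords r) = seen_colouring r v w"
  shows "rgraph_iso (model_ball r (w, v)) (shift_ball r x)"
    and "rgraph_iso (shift_ball r x) (model_ball r (w, v))"
  by (rule ball_iso_of_coincidences;
      use model_coincidence_iff[OF good w x(1)] model_labels_agree[OF good w x(2)] in auto)+

lemma seen_coords_inj:
  assumes good: "good r v"
  shows "inj_on (\<lambda>j. \<phi> (inv (e j)) v) (label_coords r)"
    and "(\<lambda>j. \<phi> (inv (e j)) v) ` label_coords r \<subseteq> {..<n}"
proof -
  show "inj_on (\<lambda>j. \<phi> (inv (e j)) v) (label_coords r)"
  proof (rule inj_onI)
    fix i j assume "i \<in> label_coords r" "j \<in> label_coords r" "\<phi> (inv (e i)) v = \<phi> (inv (e j)) v"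
    then have "inv (e i) = inv (e j)"
      using good_separates[OF good label_coord_ball_elem label_coord_ball_elem] by blast
    then show "i = j" using enum_inj by (metis enum_in inv_inv inj_eq)
  qed
  show "(\<lambda>j. \<phi> (inv (e j)) v) ` label_coords r \<subseteq> {..<n}"
    using good by (auto simp: good_def intro!: phi_less)
qed

lemma card_good_fibre:
  assumes good: "good r v"
  shows "card {w \<in> colourings. rgraph_iso (model_ball r (w, v)) \<alpha>}
       = card {f \<in> PiE (label_coords r) (\<lambda>_. UNIV). ball_type r \<alpha> f} * 2 ^ (n - card (label_coords r))"
proof -
  have "rgraph_iso (model_ball r (w, v)) \<alpha> \<longleftrightarrow> ball_type r \<alpha> (seen_colouring r v w)"
    if w: "w \<in> colourings" for w
  proof
    have "seen_colouring r v w \<in> PiE (label_coords r) (\<lambda>_. UNIV)" by (simp add: seen_colouring_def)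
    then obtain x where x: "shift_pattern r x = group_pattern r" "restrict x (label_coords r) = seen_colouring r v w"
      using free_point_with_colouring by blast
    assume "rgraph_iso (model_ball r (w, v)) \<alpha>"
    then have "rgraph_iso (shift_ball r x) \<alpha>" using model_ball_iso(2)[OF good w x] rgraph_iso_trans by blast
    then show "ball_type r \<alpha> (seen_colouring r v w)" using x by (auto simp: ball_type_def)
  next
    assume "ball_type r \<alpha> (seen_colouring r v w)"
    then obtain x where x: "shift_pattern r x = group_pattern r" "restrict x (label_coords r) = seen_colouring r v w"
        "rgraph_iso (shift_ball r x) \<alpha>"
      by (auto simp: ball_type_def)
    then show "rgraph_iso (model_ball r (w, v)) \<alpha>" using model_ball_iso(1)[OF good w x(1,2)] rgraph_iso_trans by blast
  qed
  then have "{w \<in> colourings. rgraph_iso (model_ball r (w, v)) \<alpha>}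
      = {w \<in> colourings. ball_type r \<alpha> (seen_colouring r v w)}" by blast
  also have "card \<dots> = card {f \<in> PiE (label_coords r) (\<lambda>_. UNIV). ball_type r \<alpha> f} * 2 ^ (card {..<n} - card (label_coords r))"
    unfolding colourings_def seen_colouring_def by (rule card_colourings_pullback[OF _ seen_coords_inj[OF good]]) simp
  finally show ?thesis by simp
qed

lemma good_fibre_proportion:
  assumes good: "good r v"
  shows "real (card {w \<in> colourings. rgraph_iso (model_ball r (w, v)) \<alpha>}) / 2 ^ n = p_meas r (\<lambda>i. bshift G e (s i)) \<alpha>"
proof -
  have "card (label_coords r) \<le> n"
    using card_inj_on_le[OF seen_coords_inj[OF good]] by fastforce
  then have "(2::real) ^ n = 2 ^ (n - card (label_coords r)) * 2 ^ card (label_coords r)"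
    by (simp flip: power_add)
  then show ?thesis by (simp add: card_good_fibre[OF good] p_meas_shift)
qed

lemma p_fin_model_error:
  assumes n: "n > 0" and bad: "card {v \<in> {..<n}. \<not> good r v} \<le> B"
  shows "\<bar>p_fin r model_space model_act model_label \<alpha> - p_meas r (\<lambda>i. bshift G e (s i)) \<alpha>\<bar> \<le> B / n"
proof -
  let ?q = "p_meas r (\<lambda>i. bshift G e (s i)) \<alpha>"
  define N where "N v = card {w \<in> colourings. rgraph_iso (model_ball r (w, v)) \<alpha>}" for v
  define t where "t v = real (N v) / 2 ^ n - ?q" for v
  have t_good: "good r v \<Longrightarrow> t v = 0" for v using good_fibre_proportion by (simp add: t_def N_def)
  have t_le: "\<bar>t v\<bar> \<le> 1" for v
  proof -
    have "N v \<le> card colourings" unfolding N_def by (rule card_mono[OF finite_colourings]) auto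
    then have "N v \<le> 2 ^ n" using card_colourings by simp
    then have "real (N v) \<le> real ((2::nat) ^ n)" by (simp only: of_nat_le_iff)
    then have "real (N v) / 2 ^ n \<le> 1" by simp
    moreover have "0 \<le> real (N v) / 2 ^ n" by simp
    ultimately show ?thesis
      unfolding t_def abs_le_iff using p_meas_bounds[of r "\<lambda>i. bshift G e (s i)" \<alpha>] by linarith
  qed
  have "card {z \<in> model_space. rgraph_iso (model_ball r z) \<alpha>} = (\<Sum>v<n. N v)"
    unfolding model_space_def N_def by (rule card_product_filter[OF finite_colourings finite_lessThan])
  then have "p_fin r model_space model_act model_label \<alpha> = (\<Sum>v<n. real (N v)) / (2 ^ n * n)"
    by (simp add: p_fin_def model_space_def card_colourings card_cartesian_product)
  also have "\<dots> = (\<Sum>v<n. t v + ?q) / n"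
    by (simp add: t_def sum_divide_distrib[symmetric] divide_divide_eq_left mult.commute)
  also have "\<dots> = (\<Sum>v<n. t v) / n + ?q"
    using n by (simp add: sum.distrib add_divide_distrib)
  finally have "p_fin r model_space model_act model_label \<alpha> - ?q = (\<Sum>v<n. t v) / n" by simp
  moreover have "\<bar>\<Sum>v<n. t v\<bar> \<le> B"
  proof -
    have "\<bar>\<Sum>v<n. t v\<bar> \<le> (\<Sum>v<n. \<bar>t v\<bar>)" by (rule sum_abs)
    also have "\<dots> \<le> (\<Sum>v<n. if good r v then 0 else 1)"
      by (intro sum_mono) (auto simp: t_good t_le)
    also have "\<dots> = real (card {v \<in> {..<n}. \<not> good r v})" by (simp add: sum.If_cases Int_def)
    finally show ?thesis using bad by simp
  qed
  ultimately show ?thesis using n by (simp add: divide_right_mono)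
qed

lemma card_bad_points:
  assumes K: "control_set r \<subseteq> F" and F: "F \<subseteq> carrier G"
    and mult: "\<forall>a\<in>F. \<forall>b\<in>F. real (card {k\<in>{..<n}. (\<phi> a \<circ> \<phi> b \<circ> inv_into UNIV (\<phi> (a \<otimes> b))) k = k}) \<ge> (1 - \<epsilon>) * real n"
    and free: "\<forall>a\<in>F. a \<noteq> \<one> \<longrightarrow> real (card {k\<in>{..<n}. \<phi> a k = k}) \<le> \<epsilon> * real n"
    and eps: "0 \<le> \<epsilon>"
  shows "real (card {v \<in> {..<n}. \<not> good r v}) \<le> (real (card (control_set r)) ^ 2 + real (card (control_set r))) * \<epsilon> * real n"
proof -
  let ?K = "control_set r"
  define fail where "fail p = {v \<in> {..<n}. \<phi> (fst p) (\<phi> (snd p) v) \<noteq> \<phi> (fst p \<otimes> snd p) v}" for p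
  define fixed_by where "fixed_by a = {v \<in> {..<n}. \<phi> a v = v}" for a
  have finK: "finite ?K" by (rule finite_control_set)
  have fail_le: "real (card (fail p)) \<le> \<epsilon> * n" if p: "p \<in> ?K \<times> ?K" for p
  proof -
    obtain a b where ab: "p = (a, b)" "a \<in> F" "b \<in> F" using p K by auto
    then have "\<phi> (a \<otimes> b) permutes {..<n}" using F by (intro phi_permutes) auto
    then show ?thesis
      unfolding fail_def ab(1) fst_conv snd_conv using mult ab(2,3) by (intro card_multiplicativity_failures) auto
  qed
  have fixed_by_le: "real (card (fixed_by a)) \<le> \<epsilon> * n" if "a \<in> {a\<in>?K. a \<noteq> \<one>}" for a
    using free that K by (auto simp: fixed_by_def)
  have "{v \<in> {..<n}. \<not> good r v} \<subseteq> (\<Union>p\<in>?K \<times> ?K. fail p) \<union> (\<Union>a\<in>{a\<in>?K. a \<noteq> \<one>}. fixed_by a)"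
    by (auto simp: good_def fail_def fixed_by_def)
  then have "card {v \<in> {..<n}. \<not> good r v} \<le> card ((\<Union>p\<in>?K \<times> ?K. fail p) \<union> (\<Union>a\<in>{a\<in>?K. a \<noteq> \<one>}. fixed_by a))"
    by (rule card_mono[rotated]) (auto simp: fail_def fixed_by_def intro: finite_subset[of _ "{..<n}"])
  also have "\<dots> \<le> (\<Sum>p\<in>?K \<times> ?K. card (fail p)) + (\<Sum>a\<in>{a\<in>?K. a \<noteq> \<one>}. card (fixed_by a))"
    using finK by (intro order.trans[OF card_Un_le] add_mono card_UN_le) auto
  finally have "real (card {v \<in> {..<n}. \<not> good r v})
      \<le> (\<Sum>p\<in>?K \<times> ?K. real (card (fail p))) + (\<Sum>a\<in>{a\<in>?K. a \<noteq> \<one>}. real (card (fixed_by a)))"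
    by (simp flip: of_nat_sum of_nat_add)
  also have "\<dots> \<le> (\<Sum>p\<in>?K \<times> ?K. \<epsilon> * n) + (\<Sum>a\<in>{a\<in>?K. a \<noteq> \<one>}. \<epsilon> * n)"
    using fail_le fixed_by_le by (intro add_mono sum_mono) auto
  also have "\<dots> = real (card (?K \<times> ?K)) * (\<epsilon> * n) + real (card {a\<in>?K. a \<noteq> \<one>}) * (\<epsilon> * n)"
    by simp
  also have "\<dots> \<le> real (card ?K) ^ 2 * (\<epsilon> * n) + real (card ?K) * (\<epsilon> * n)"
    using eps finK card_mono[OF finK, of "{a\<in>?K. a \<noteq> \<one>}"]
    by (intro add_mono mult_right_mono) (auto simp: card_cartesian_product power2_eq_square)
  finally show ?thesis by (simp add: algebra_simps)
qed

lemma p_fin_model_approx: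
  assumes n: "n > 0" and K: "control_set r \<subseteq> F" and F: "F \<subseteq> carrier G"
    and mult: "\<forall>a\<in>F. \<forall>b\<in>F. real (card {k\<in>{..<n}. (\<phi> a \<circ> \<phi> b \<circ> inv_into UNIV (\<phi> (a \<otimes> b))) k = k}) \<ge> (1 - \<epsilon>) * real n"
    and free: "\<forall>a\<in>F. a \<noteq> \<one> \<longrightarrow> real (card {k\<in>{..<n}. \<phi> a k = k}) \<le> \<epsilon> * real n"
    and eps: "0 \<le> \<epsilon>"
  shows "\<bar>p_fin r model_space model_act model_label \<alpha> - p_meas r (\<lambda>i. bshift G e (s i)) \<alpha>\<bar>
           \<le> (real (card (control_set r)) ^ 2 + real (card (control_set r))) * \<epsilon>"
proof -
  let ?C = "real (card (control_set r)) ^ 2 + real (card (control_set r))"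
  have "\<bar>p_fin r model_space model_act model_label \<alpha> - p_meas r (\<lambda>i. bshift G e (s i)) \<alpha>\<bar>
      \<le> real (card {v \<in> {..<n}. \<not> good r v}) / n"
    by (rule p_fin_model_error[OF n order.refl])
  also have "\<dots> \<le> ?C * \<epsilon>"
    using card_bad_points[OF K F mult free eps] n by (simp add: divide_le_eq)
  finally show ?thesis .
qed

end

lemma sofic_group_approximations:
  fixes G :: "('a, 'b) monoid_scheme"
  assumes sofic: "sofic_group G" and F: "\<And>m. finite (F m)" "\<And>m. F m \<subseteq> carrier G"
    and eps: "\<And>m. 0 < \<epsilon> m" "\<And>m. \<epsilon> m < 1"
  obtains N :: "nat \<Rightarrow> nat" and \<Phi> :: "nat \<Rightarrow> 'a \<Rightarrow> nat \<Rightarrow> nat"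
  where "\<And>m. N m > 0" "\<And>m g. g \<in> carrier G \<Longrightarrow> \<Phi> m g permutes {..<N m}" "\<And>m. \<Phi> m \<one>\<^bsub>G\<^esub> = id"
    "\<And>m. \<forall>a\<in>F m. \<forall>b\<in>F m. real (card {k\<in>{..<N m}. (\<Phi> m a \<circ> \<Phi> m b \<circ> inv_into UNIV (\<Phi> m (a \<otimes>\<^bsub>G\<^esub> b))) k = k})
            \<ge> (1 - \<epsilon> m) * real (N m)"
    "\<And>m. \<forall>a\<in>F m. a \<noteq> \<one>\<^bsub>G\<^esub> \<longrightarrow> real (card {k\<in>{..<N m}. \<Phi> m a k = k}) \<le> \<epsilon> m * real (N m)"
proof -
  define good_approx where "good_approx m n (\<phi> :: 'a \<Rightarrow> nat \<Rightarrow> nat) \<longleftrightarrow> n > 0 \<and>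
      (\<forall>g\<in>carrier G. \<phi> g permutes {..<n}) \<and> \<phi> \<one>\<^bsub>G\<^esub> = id \<and>
      (\<forall>a\<in>F m. \<forall>b\<in>F m. real (card {k\<in>{..<n}. (\<phi> a \<circ> \<phi> b \<circ> inv_into UNIV (\<phi> (a \<otimes>\<^bsub>G\<^esub> b))) k = k})
          \<ge> (1 - \<epsilon> m) * real n) \<and>
      (\<forall>a\<in>F m. a \<noteq> \<one>\<^bsub>G\<^esub> \<longrightarrow> real (card {k\<in>{..<n}. \<phi> a k = k}) \<le> \<epsilon> m * real n)" for m n \<phi>
  have "\<forall>m. \<exists>p. good_approx m (fst p) (snd p)"
  proof
    fix m
    have "\<exists>n. n > 0 \<and> (\<exists>\<phi> :: 'a \<Rightarrow> nat \<Rightarrow> nat. (\<forall>g\<in>carrier G. \<phi> g permutes {..<n}) \<and> \<phi> \<one>\<^bsub>G\<^esub> = id \<and>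
       (\<forall>a\<in>F m. \<forall>b\<in>F m. real (card {k\<in>{..<n}. (\<phi> a \<circ> \<phi> b \<circ> inv_into UNIV (\<phi> (a \<otimes>\<^bsub>G\<^esub> b))) k = k})
          \<ge> (1 - \<epsilon> m) * real n) \<and>
       (\<forall>a\<in>F m. a \<noteq> \<one>\<^bsub>G\<^esub> \<longrightarrow> real (card {k\<in>{..<n}. \<phi> a k = k}) \<le> \<epsilon> m * real n))"
      using sofic eps[of m] F[of m] unfolding sofic_group_def by blast
    then show "\<exists>p. good_approx m (fst p) (snd p)" unfolding good_approx_def by auto
  qed
  from choice[OF this] obtain p where "\<And>m. good_approx m (fst (p m)) (snd (p m))" by blast
  then show thesis by (intro that[of "\<lambda>m. fst (p m)" "\<lambda>m. snd (p m)"]) (auto simp: good_approx_def)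
qed

context bernoulli_shift
begin

text \<open>Take epsilon_m = 1/(m+2) and F_m the union of the control sets of radius at most m.
  For m \<ge> r the m-th finite model approximates p_alpha at radius r within a constant times
  epsilon_m, so its statistics converge; finally the models are copied onto sets of naturals.\<close>

theorem sofic_bernoulli_shift:
  assumes sofic: "sofic_group G"
  shows "sofic_action (\<lambda>i. bshift G e (s i))"
proof -
  define \<epsilon> where "\<epsilon> m = 1 / (real m + 2)" for m :: nat
  define F where "F m = (\<Union>r\<in>{..m}. control_set r)" for m
  have F: "finite (F m)" "F m \<subseteq> carrier G" for m
    using finite_control_set control_set_in by (auto simp: F_def)
  have \<epsilon>: "0 < \<epsilon> m" "\<epsilon> m < 1" for m by (auto simp: \<epsilon>_def)
  obtain N \<Phi> where N: "\<And>m. N m > 0" and \<Phi>: "\<And>m g. g \<in> carrier G \<Longrightarrow> \<Phi> m g permutes {..<N m}"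
      "\<And>m. \<Phi> m \<one> = id"
    and mult: "\<And>m. \<forall>a\<in>F m. \<forall>b\<in>F m. real (card {k\<in>{..<N m}. (\<Phi> m a \<circ> \<Phi> m b \<circ> inv_into UNIV (\<Phi> m (a \<otimes> b))) k = k})
            \<ge> (1 - \<epsilon> m) * real (N m)"
    and free: "\<And>m. \<forall>a\<in>F m. a \<noteq> \<one> \<longrightarrow> real (card {k\<in>{..<N m}. \<Phi> m a k = k}) \<le> \<epsilon> m * real (N m)"
    using sofic_group_approximations[where F = F and \<epsilon> = \<epsilon>, OF sofic F \<epsilon>] by blast
  interpret model: sofic_model G e s "N m" "\<Phi> m" for m
    using \<Phi> by unfold_locales auto
  define Y where "Y m = {0..<card (model.model_space m)}" for m
  define TT where "TT m = nat_copy_act (model.model_space m) (model.model_act m)" for m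
  define L where "L m = nat_copy_label (model.model_space m) (model.model_label m)" for m
  have fin: "finite (model.model_space m)" for m
    by (simp add: model.model_space_def model.finite_colourings)
  have "card (model.model_space m) > 0" for m
    using N[of m] by (simp add: model.model_space_def model.card_colourings card_cartesian_product)
  then have Y: "finite (Y m)" "Y m \<noteq> {}" "\<And>i. i \<ge> 1 \<Longrightarrow> bij_betw (TT m i) (Y m) (Y m)" for m
    using nat_copy_act_bij[OF fin model.model_act_bij] by (auto simp: Y_def TT_def)
  have stat: "p_fin r (Y m) (TT m) (L m) \<alpha> = p_fin r (model.model_space m) (model.model_act m) (model.model_label m) \<alpha>"
    for m r \<alpha> unfolding Y_def TT_def L_def using model.model_act_bij by (intro p_fin_nat_copy[OF fin]) auto
  have "(\<lambda>m. p_fin r (Y m) (TT m) (L m) \<alpha>) \<longlonglongrightarrow> p_meas r (\<lambda>i. bshift G e (s i)) \<alpha>" for r and \<alpha> :: "nat rgraph"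
    unfolding stat
  proof (rule tendsto_of_bound_inverse)
    fix m assume "m \<ge> r"
    then have "control_set r \<subseteq> F m" by (auto simp: F_def)
    then show "\<bar>p_fin r (model.model_space m) (model.model_act m) (model.model_label m) \<alpha> - p_meas r (\<lambda>i. bshift G e (s i)) \<alpha>\<bar>
        \<le> (real (card (control_set r)) ^ 2 + real (card (control_set r))) * (1 / (real m + 2))"
      using model.p_fin_model_approx[OF N _ F(2) mult free] by (simp add: \<epsilon>_def)
  qed
  then show ?thesis
    unfolding sofic_action_def using measure_preserving_shift_action Y
    by (intro conjI exI[of _ Y] exI[of _ TT] exI[of _ L]) auto
qed

end

theorem proposition7p1:
  fixes G :: "('a, 'b) monoid_scheme" and s :: "nat \<Rightarrow> 'a" and e :: "nat \<Rightarrow> 'a"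
  assumes "group G"
    and "sofic_group G"
    and "bij_betw e UNIV (carrier G)"
    and "\<forall>i\<ge>1. s i \<in> carrier G"
    and "generate G (s ` {1..}) = carrier G"
  shows "sofic_action (\<lambda>i. bshift G e (s i)) \<and>
         sofic_eqrel {(x, y). \<exists>g\<in>carrier G. y = bshift G e g x}"
proof -
  interpret bernoulli_shift G e s
    using assms(1,3,4) by (intro bernoulli_shift.intro bernoulli_shift_axioms.intro) auto
  have "sofic_action (\<lambda>i. bshift G e (s i))" by (rule sofic_bernoulli_shift[OF assms(2)])
  moreover have "orbit_rel (\<lambda>i. bshift G e (s i)) = {(x, y). \<exists>g\<in>carrier G. y = bshift G e g x}"
    by (rule orbit_rel_shift[OF assms(5)])
  ultimately show ?thesis unfolding sofic_eqrel_def by blast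
qed

end
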